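(* For any $w, w' \in \mathcal{C}\langle A \rangle$ and any integer $M \ge 1$, \[ Z^{\mathcal{S}, \mathrm{sh}}_{q, M}(w \,\mathrm{sh}_{\hbar}\, w')=Z^{\mathcal{S}, \mathrm{sh}}_{q, M}\bigl(w \, \psi^{\mathrm{sh}}(w')\bigr), \] where $w\,\psi^{\mathrm{sh}}(w')$ denotes the concatenation product in $\mathcal{C}\langle A\rangle$.
   Context: Let $\mathcal{C}=\mathbb{Q}[\hbar]$ with $\hbar$ a formal variable, and let $\mathfrak{H}=\mathcal{C}\langle a,b\rangle$ be the non-commutative polynomial ring in $a,b$ over $\mathcal{C}$. For $k\ge 1$ put $g_k=ba^k$. Let $A=\{\hbar b\}\cup\{ba^k\mid k\ge 1\}$, let $\mathcal{C}\langle A\rangle$ be the $\mathcal{C}$-subalgebra of $\mathfrak{H}$ generated by $1$ and $A$, and let $\mathfrak{z}$ be the $\mathcal{C}$-span of $A$. Fix $q\in\mathbb{C}$ with $0<|q|<1$ and regard $\mathbb{C}$ as a $\mathcal{C}$-module with $\hbar$ acting as multiplication by $1-q$. Let $[m]=(1-q^m)/(1-q)$. For $m\ge 1$ let $F_q(m;\cdot):\mathfrak{z}\to\mathbb{C}$ be the $\mathcal{C}$-linear map with $F_q(m;\hbar b)=1-q$ and $F_q(m;g_k)=q^{km}/[m]^k$ for $k\ge1$. For $M\ge 1$ let $Z_{q,M}:\mathcal{C}\langle A\rangle\to\mathbb{C}$ be the $\mathcal{C}$-linear map with $Z_{q,M}(1)=1$ and $Z_{q,M}(u_1\cdots u_r)=\sum_{0<m_1<\cdots<m_r<M}\prod_{i=1}^r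 F_q(m_i;u_i)$ for $u_1,\dots,u_r\in A$. The shuffle product $\mathrm{sh}_\hbar$ on $\mathfrak{H}$ (written infix) is the $\mathcal{C}$-bilinear product determined by $w\,\mathrm{sh}_\hbar\,1=1\,\mathrm{sh}_\hbar\,w=w$, $wa\,\mathrm{sh}_\hbar\,w'a=(wa\,\mathrm{sh}_\hbar\,w'+w\,\mathrm{sh}_\hbar\,w'a+\hbar\,(w\,\mathrm{sh}_\hbar\,w'))a$ and $wb\,\mathrm{sh}_\hbar\,w'=w\,\mathrm{sh}_\hbar\,w'b=(w\,\mathrm{sh}_\hbar\,w')b$ for all $w,w'\in\mathfrak{H}$; $\mathcal{C}\langle A\rangle$ is closed under it. Let $\psi^{\mathrm{sh}}$ be the $\mathcal{C}$-algebra anti-involution of $\mathcal{C}\langle A\rangle$ with $\psi^{\mathrm{sh}}(\hbar b)=\hbar b$ and $\psi^{\mathrm{sh}}(ba^k)=b(-a-\hbar)^k$ for $k\ge1$. Define the $\mathcal{C}$-linear map $w^{\mathcal{S},\mathrm{sh}}_\hbar:\mathcal{C}\langle A\rangle\to\mathcal{C}\langle A\rangle$ by $w^{\mathcal{S},\mathrm{sh}}_\hbar(1)=1$ and $w^{\mathcal{S},\mathrm{sh}}_\hbar(u_1\cdots u_r)=\sum_{i=0}^r (u_1\cdots u_i)\,\mathrm{sh}_\hbar\, \psi^{\mathrm{sh}}(u_{i+1}\cdots u_r)$ for $r\ge1$, $u_1,\dots,u_r\in A$, and set $Z^{\mathcal{S},\mathrm{sh}}_{q,M}=Z_{q,M}\circ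 w^{\mathcal{S},\mathrm{sh}}_\hbar$. *)

theory Defs
  imports Complex_Main "HOL-Computational_Algebra.Polynomial"
begin

datatype letter = La | Lb

text \<open>Elements of H are coefficient functions on words in a,b (only finitely
supported ones arise); coefficients lie in C = Q[hbar] = rat poly.\<close>
type_synonym H = "letter list \<Rightarrow> rat poly"

definition hbar :: "rat poly" where "hbar = [:0, 1:]"

definition monoH :: "letter list \<Rightarrow> H" where
  "monoH u = (\<lambda>t. if t = u then 1 else 0)"

definition suppH :: "H \<Rightarrow> letter list set" where
  "suppH x = {u. x u \<noteq> 0}"

definition addH :: "H \<Rightarrow> H \<Rightarrow> H" where
  "addH x y = (\<lambda>t. x t + y t)"

definition scaleH :: "rat poly \<Rightarrow> H \<Rightarrow> H" where
  "scaleH c x = (\<lambda>t. c * x t)"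

definition bilH :: "(letter list \<Rightarrow> letter list \<Rightarrow> H) \<Rightarrow> H \<Rightarrow> H \<Rightarrow> H" where
  "bilH f x y = (\<lambda>t. \<Sum>u\<in>suppH x. \<Sum>v\<in>suppH y. x u * y v * f u v t)"

definition concH :: "H \<Rightarrow> H \<Rightarrow> H" where
  "concH = bilH (\<lambda>u v. monoH (u @ v))"

definition appH :: "H \<Rightarrow> letter \<Rightarrow> H" where
  "appH x l = (\<lambda>t. if t \<noteq> [] \<and> last t = l then x (butlast t) else 0)"

text \<open>shr works on reversed words (head = last letter), result in normal orientation.\<close>
function (sequential) shr :: "letter list \<Rightarrow> letter list \<Rightarrow> H" where
  "shr [] v = monoH (rev v)"
| "shr u [] = monoH (rev u)"
| "shr (Lb # u) v = appH (shr u v) Lb"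
| "shr u (Lb # v) = appH (shr u v) Lb"
| "shr (La # u) (La # v) =
     appH (addH (addH (shr (La # u) v) (shr u (La # v))) (scaleH hbar (shr u v))) La"
  by pat_completeness auto
termination
  by (relation "measure (\<lambda>(u, v). length u + length v)") auto

definition shW :: "letter list \<Rightarrow> letter list \<Rightarrow> H" where
  "shW u v = shr (rev u) (rev v)"

definition shH :: "H \<Rightarrow> H \<Rightarrow> H" where
  "shH = bilH shW"

text \<open>A-words are lists of naturals: 0 stands for hbar b, k \<ge> 1 for b a^k.\<close>
definition wordA :: "nat list \<Rightarrow> letter list" where
  "wordA \<alpha> = concat (map (\<lambda>k. Lb # replicate k La) \<alpha>)"

definition embA :: "nat list \<Rightarrow> H" where
  "embA \<alpha> = scaleH (hbar ^ length (filter (\<lambda>k. k = 0) \<alpha>)) (monoH (wordA \<alpha>))"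

definition Arep :: "H \<Rightarrow> (nat list \<Rightarrow> rat poly) \<Rightarrow> bool" where
  "Arep x c \<longleftrightarrow> finite {\<alpha>. c \<alpha> \<noteq> 0} \<and>
     x = (\<lambda>t. \<Sum>\<alpha>\<in>{\<alpha>. c \<alpha> \<noteq> 0}. c \<alpha> * embA \<alpha> t)"

definition CA :: "H set" where
  "CA = {x. \<exists>c. Arep x c}"

definition cA :: "H \<Rightarrow> nat list \<Rightarrow> rat poly" where
  "cA x = (THE c. Arep x c)"

definition linA :: "(nat list \<Rightarrow> H) \<Rightarrow> H \<Rightarrow> H" where
  "linA f x = (\<lambda>t. \<Sum>\<alpha>\<in>{\<alpha>. cA x \<alpha> \<noteq> 0}. cA x \<alpha> * f \<alpha> t)"

fun powH :: "H \<Rightarrow> nat \<Rightarrow> H" where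
  "powH x 0 = monoH []"
| "powH x (Suc n) = concH x (powH x n)"

definition psiL :: "nat \<Rightarrow> H" where
  "psiL k = (if k = 0 then embA [0]
     else concH (monoH [Lb])
            (powH (\<lambda>t. - monoH [La] t - hbar * monoH [] t) k))"

definition psiW :: "nat list \<Rightarrow> H" where
  "psiW \<alpha> = foldr concH (map psiL (rev \<alpha>)) (monoH [])"

definition psiSh :: "H \<Rightarrow> H" where
  "psiSh = linA psiW"

definition wSW :: "nat list \<Rightarrow> H" where
  "wSW \<alpha> = (\<lambda>t. \<Sum>i\<le>length \<alpha>. shH (embA (take i \<alpha>)) (psiW (drop i \<alpha>)) t)"

definition wS :: "H \<Rightarrow> H" where
  "wS = linA wSW"

definition qint :: "complex \<Rightarrow> nat \<Rightarrow> complex" where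
  "qint q m = (1 - q ^ m) / (1 - q)"

text \<open>F_q(m; u) for u = hbar b (k = 0) or u = b a^k (k \<ge> 1).\<close>
definition Fq :: "complex \<Rightarrow> nat \<Rightarrow> nat \<Rightarrow> complex" where
  "Fq q m k = (if k = 0 then 1 - q else q ^ (k * m) / (qint q m) ^ k)"

definition ZW :: "complex \<Rightarrow> nat \<Rightarrow> nat list \<Rightarrow> complex" where
  "ZW q M \<alpha> = (\<Sum>ms\<in>{ms. length ms = length \<alpha> \<and> sorted_wrt (<) ms \<and>
                          (\<forall>m\<in>set ms. 0 < m \<and> m < M)}.
                 \<Prod>i<length \<alpha>. Fq q (ms ! i) (\<alpha> ! i))"

definition evC :: "complex \<Rightarrow> rat poly \<Rightarrow> complex" where
  "evC q c = poly (map_poly of_rat c) (1 - q)"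

definition Zq :: "complex \<Rightarrow> nat \<Rightarrow> H \<Rightarrow> complex" where
  "Zq q M x = (\<Sum>\<alpha>\<in>{\<alpha>. cA x \<alpha> \<noteq> 0}. evC q (cA x \<alpha>) * ZW q M \<alpha>)"

definition ZqS :: "complex \<Rightarrow> nat \<Rightarrow> H \<Rightarrow> complex" where
  "ZqS q M x = Zq q M (wS x)"

end

theory Submission
  imports Defs "HOL-Library.Function_Algebras"
begin

(*
  The identity already holds in C<A>, before Z_{q,M} is applied:
  w^S(w sh w') = w^S(w psi(w')).

  Up to powers of hbar, w^S maps a word u to the sum of x sh psi(y) over the factorisations
  u = x y with y empty or beginning with b, where psi(b y) = b rho(y) and rho is the
  anti-automorphism of H with a |-> -a - hbar, b |-> b. The terms with y nonempty form the cut
  sum K_{1,b}(u), where K_{p,q}(v) is the sum of (p x) sh (q rho(z)) over v = x b z. Peeling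
  off last letters with the recursive definition of sh gives the Leibniz rule
    K_{1,s}(x sh y) = K_{1, y sh s}(x) + K_{1, x sh s}(y),
  and cut sums are symmetric under rho: K_{p,q}(rho(v)) = K_{q,p}(v). Together these identify
  w^S(x sh y) with w^S(x psi(y)) for every word x and every A-word y.

  The rest is bookkeeping: C<A> consists of the elements supported on A-words whose
  coefficient at u is divisible by hbar^n, n the number of letters b of u not followed by a.
  This description is preserved by sh, concatenation and psi, and on such elements the
  coefficient extraction underlying linA is plain linear extension.
*)

section \<open>Finitely supported elements and linear extensions\<close>

definition finH :: "H \<Rightarrow> bool" where
  "finH x \<longleftrightarrow> finite (suppH x)"

definition linH :: "(letter list \<Rightarrow> H) \<Rightarrow> H \<Rightarrow> H" where
  "linH f x = (\<lambda>t. \<Sum>u\<in>suppH x. x u * f u t)"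

abbreviation oneH :: H where
  "oneH \<equiv> monoH []"

lemma linH_eq_sum:
  assumes "finite S" "suppH x \<subseteq> S"
  shows "linH f x = (\<lambda>t. \<Sum>u\<in>S. x u * f u t)"
proof
  fix t show "linH f x t = (\<Sum>u\<in>S. x u * f u t)"
    unfolding linH_def by (rule sum.mono_neutral_left) (use assms in \<open>auto simp: suppH_def\<close>)
qed

lemma suppH_add: "suppH (x + y) \<subseteq> suppH x \<union> suppH y"
  by (auto simp: suppH_def)

lemma suppH_diff: "suppH (x - y) \<subseteq> suppH x \<union> suppH y"
  by (auto simp: suppH_def)

lemma suppH_uminus [simp]: "suppH (- x) = suppH x"
  by (auto simp: suppH_def)

lemma suppH_scaleH: "suppH (scaleH c x) \<subseteq> suppH x"
  by (auto simp: suppH_def scaleH_def)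

lemma suppH_monoH: "suppH (monoH u) \<subseteq> {u}"
  by (auto simp: suppH_def monoH_def)

lemma suppH_zero [simp]: "suppH 0 = {}"
  by (auto simp: suppH_def)

lemma finH_add [simp]: "finH x \<Longrightarrow> finH y \<Longrightarrow> finH (x + y)"
  unfolding finH_def using suppH_add finite_subset by blast

lemma finH_diff [simp]: "finH x \<Longrightarrow> finH y \<Longrightarrow> finH (x - y)"
  unfolding finH_def using suppH_diff finite_subset by blast

lemma finH_uminus [simp]: "finH x \<Longrightarrow> finH (- x)"
  by (simp add: finH_def)

lemma finH_scaleH [simp]: "finH x \<Longrightarrow> finH (scaleH c x)"
  unfolding finH_def using suppH_scaleH finite_subset by blast

lemma finH_monoH [simp]: "finH (monoH u)"
  unfolding finH_def using suppH_monoH finite_subset by blast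

lemma finH_zero [simp]: "finH 0"
  by (simp add: finH_def)

lemma linH_add:
  assumes "finH x" "finH y"
  shows "linH f (x + y) = linH f x + linH f y"
proof -
  let ?S = "suppH x \<union> suppH y"
  have S: "finite ?S"
    using assms by (simp add: finH_def)
  have "linH f (x + y) = (\<lambda>t. \<Sum>u\<in>?S. (x + y) u * f u t)"
    by (rule linH_eq_sum[OF S suppH_add])
  moreover have "linH f x = (\<lambda>t. \<Sum>u\<in>?S. x u * f u t)" "linH f y = (\<lambda>t. \<Sum>u\<in>?S. y u * f u t)"
    by (rule linH_eq_sum[OF S], blast)+
  ultimately show ?thesis
    by (simp add: fun_eq_iff distrib_right sum.distrib)
qed

lemma linH_scaleH: "finH x \<Longrightarrow> linH f (scaleH c x) = scaleH c (linH f x)"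
  by (simp add: linH_eq_sum[OF _ suppH_scaleH, of x] finH_def)
     (simp add: linH_def scaleH_def fun_eq_iff sum_distrib_left mult.assoc)

lemma linH_uminus: "linH f (- x) = - linH f x"
  by (simp add: linH_def fun_eq_iff sum_negf)

lemma linH_diff: "finH x \<Longrightarrow> finH y \<Longrightarrow> linH f (x - y) = linH f x - linH f y"
  using linH_add[of x "- y" f] by (simp add: linH_uminus)

lemma linH_zero [simp]: "linH f 0 = 0"
  by (simp add: linH_def fun_eq_iff)

lemma linH_monoH [simp]: "linH f (monoH u) = f u"
  by (simp add: linH_eq_sum[OF _ suppH_monoH]) (simp add: monoH_def fun_eq_iff)

lemma linH_fun_zero [simp]: "linH (\<lambda>u. 0) x = 0"
  by (simp add: linH_def fun_eq_iff)

lemma linH_fun_add: "linH (\<lambda>u. f u + g u) x = linH f x + linH g x"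
  by (simp add: linH_def fun_eq_iff distrib_left sum.distrib)

lemma linH_fun_diff: "linH (\<lambda>u. f u - g u) x = linH f x - linH g x"
  by (simp add: linH_def fun_eq_iff right_diff_distrib sum_subtractf)

lemma linH_fun_uminus: "linH (\<lambda>u. - f u) x = - linH f x"
  by (simp add: linH_def fun_eq_iff sum_negf)

lemma linH_fun_scaleH: "linH (\<lambda>u. scaleH c (f u)) x = scaleH c (linH f x)"
  by (simp add: linH_def scaleH_def fun_eq_iff sum_distrib_left mult.left_commute)

lemma linH_cong: "(\<And>u. u \<in> suppH x \<Longrightarrow> f u = g u) \<Longrightarrow> linH f x = linH g x"
  by (simp add: linH_def)

lemma suppH_linH: "suppH (linH f x) \<subseteq> (\<Union>u\<in>suppH x. suppH (f u))"
  by (force simp: suppH_def linH_def intro: sum.neutral)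

lemma finH_linH [simp]: "finH x \<Longrightarrow> (\<And>u. finH (f u)) \<Longrightarrow> finH (linH f x)"
  unfolding finH_def by (rule finite_subset[OF suppH_linH]) auto

lemma linH_monoH_self: "finH x \<Longrightarrow> linH monoH x = x"
proof
  fix t assume "finH x"
  show "linH monoH x t = x t"
  proof (cases "t \<in> suppH x")
    case True
    have "linH monoH x t = (\<Sum>u\<in>{t}. x u * monoH u t)"
      unfolding linH_def
      by (rule sum.mono_neutral_right) (use True \<open>finH x\<close> in \<open>auto simp: finH_def monoH_def\<close>)
    then show ?thesis
      by (simp add: monoH_def)
  next
    case False
    then show ?thesis
      by (auto simp: linH_def monoH_def suppH_def intro!: sum.neutral)
  qed
qed

lemma linH_linH:
  assumes "finH x" "\<And>u. finH (g u)"
  shows "linH f (linH g x) = linH (\<lambda>u. linH f (g u)) x"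
proof -
  let ?S = "\<Union>u\<in>suppH x. suppH (g u)"
  have S: "finite ?S"
    using assms by (auto simp: finH_def)
  have g: "linH f (g u) = (\<lambda>t. \<Sum>v\<in>?S. g u v * f v t)" if "u \<in> suppH x" for u
    by (rule linH_eq_sum[OF S]) (use that in auto)
  have "linH f (linH g x) = (\<lambda>t. \<Sum>v\<in>?S. \<Sum>u\<in>suppH x. x u * g u v * f v t)"
    by (simp add: linH_eq_sum[OF S suppH_linH]) (simp add: linH_def sum_distrib_right)
  also have "\<dots> = (\<lambda>t. \<Sum>u\<in>suppH x. x u * linH f (g u) t)"
    by (simp add: g sum.swap[of _ ?S] sum_distrib_left mult.assoc cong: sum.cong)
  finally show ?thesis
    by (simp add: linH_def)
qed

lemma linH_commute: "linH (\<lambda>u. linH (g u) y) x = linH (\<lambda>v. linH (\<lambda>u. g u v) x) y"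
  by (simp add: linH_def fun_eq_iff sum_distrib_left mult.left_commute sum.swap[of _ "suppH x"])

lemma bilH_eq_linH: "bilH f x y = linH (\<lambda>u. linH (f u) y) x"
  by (simp add: bilH_def linH_def fun_eq_iff sum_distrib_left mult.assoc)

lemma bilH_eq_linH_right: "bilH f x y = linH (\<lambda>v. linH (\<lambda>u. f u v) x) y"
  unfolding bilH_eq_linH by (rule linH_commute)

lemma bilH_monoH_left: "bilH f (monoH u) y = linH (f u) y"
  by (simp add: bilH_eq_linH)

lemma bilH_monoH_right: "bilH f x (monoH v) = linH (\<lambda>u. f u v) x"
  by (simp add: bilH_eq_linH)

lemma bilH_monoH_monoH [simp]: "bilH f (monoH u) (monoH v) = f u v"
  by (simp add: bilH_eq_linH)

lemma bilH_expand_left: "bilH f x y = linH (\<lambda>u. bilH f (monoH u) y) x"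
  by (simp add: bilH_eq_linH)

lemma bilH_expand_right: "bilH f x y = linH (\<lambda>v. bilH f x (monoH v)) y"
  by (simp add: bilH_eq_linH_right bilH_monoH_right)

lemma finH_bilH [simp]: "finH x \<Longrightarrow> finH y \<Longrightarrow> (\<And>u v. finH (f u v)) \<Longrightarrow> finH (bilH f x y)"
  by (simp add: bilH_eq_linH)

lemma bilH_add_left: "finH x \<Longrightarrow> finH x' \<Longrightarrow> bilH f (x + x') y = bilH f x y + bilH f x' y"
  by (simp add: bilH_eq_linH linH_add)

lemma bilH_add_right: "finH y \<Longrightarrow> finH y' \<Longrightarrow> bilH f x (y + y') = bilH f x y + bilH f x y'"
  by (simp add: bilH_eq_linH linH_add linH_fun_add)

lemma bilH_uminus_left: "bilH f (- x) y = - bilH f x y"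
  by (simp add: bilH_eq_linH linH_uminus)

lemma bilH_uminus_right: "bilH f x (- y) = - bilH f x y"
  by (simp add: bilH_eq_linH linH_uminus linH_fun_uminus)

lemma bilH_diff_left: "finH x \<Longrightarrow> finH x' \<Longrightarrow> bilH f (x - x') y = bilH f x y - bilH f x' y"
  by (simp add: bilH_eq_linH linH_diff)

lemma bilH_diff_right: "finH y \<Longrightarrow> finH y' \<Longrightarrow> bilH f x (y - y') = bilH f x y - bilH f x y'"
  by (simp add: bilH_eq_linH linH_diff linH_fun_diff)

lemma bilH_scaleH_left: "finH x \<Longrightarrow> bilH f (scaleH c x) y = scaleH c (bilH f x y)"
  by (simp add: bilH_eq_linH linH_scaleH)

lemma bilH_scaleH_right: "finH y \<Longrightarrow> bilH f x (scaleH c y) = scaleH c (bilH f x y)"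
  by (simp add: bilH_eq_linH linH_scaleH linH_fun_scaleH)

lemma bilH_zero_left [simp]: "bilH f 0 y = 0"
  by (simp add: bilH_eq_linH)

lemma bilH_zero_right [simp]: "bilH f x 0 = 0"
  by (simp add: bilH_eq_linH)

lemma bilH_linH_left:
  "finH x \<Longrightarrow> (\<And>u. finH (g u)) \<Longrightarrow> bilH f (linH g x) y = linH (\<lambda>u. bilH f (g u) y) x"
  unfolding bilH_eq_linH by (rule linH_linH)

lemma bilH_linH_right:
  "finH y \<Longrightarrow> (\<And>v. finH (g v)) \<Longrightarrow> bilH f x (linH g y) = linH (\<lambda>v. bilH f x (g v)) y"
  unfolding bilH_eq_linH_right by (rule linH_linH)

lemma appH_linH: "appH (linH f x) l = linH (\<lambda>u. appH (f u) l) x"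
  by (simp add: appH_def linH_def fun_eq_iff)

lemma appH_monoH [simp]: "appH (monoH u) l = monoH (u @ [l])"
  by (auto simp: appH_def monoH_def fun_eq_iff)

lemma appH_eq_linH: "finH x \<Longrightarrow> appH x l = linH (\<lambda>u. monoH (u @ [l])) x"
  using appH_linH[of monoH x l] by (simp add: linH_monoH_self)

lemma finH_appH [simp]: "finH x \<Longrightarrow> finH (appH x l)"
  by (simp add: appH_eq_linH)

lemma appH_add [simp]: "appH (x + y) l = appH x l + appH y l"
  and appH_diff [simp]: "appH (x - y) l = appH x l - appH y l"
  and appH_uminus [simp]: "appH (- x) l = - appH x l"
  and appH_scaleH [simp]: "appH (scaleH c x) l = scaleH c (appH x l)"
  by (simp_all add: appH_def scaleH_def fun_eq_iff)

lemma scaleH_add [simp]: "scaleH c (x + y) = scaleH c x + scaleH c y"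
  and scaleH_scaleH [simp]: "scaleH c (scaleH d x) = scaleH (c * d) x"
  and scaleH_zero [simp]: "scaleH c 0 = 0"
  and scaleH_one [simp]: "scaleH 1 x = x"
  by (simp_all add: scaleH_def fun_eq_iff algebra_simps)

lemma addH_eq_plus [simp]: "addH x y = x + y"
  by (simp add: addH_def fun_eq_iff)

lemma finH_concH [simp]: "finH x \<Longrightarrow> finH y \<Longrightarrow> finH (concH x y)"
  by (simp add: concH_def)

lemma concH_monoH [simp]: "concH (monoH u) (monoH v) = monoH (u @ v)"
  by (simp add: concH_def)

lemma concH_one_left [simp]: "finH x \<Longrightarrow> concH oneH x = x"
  by (simp add: concH_def bilH_monoH_left linH_monoH_self)

lemma concH_one_right [simp]: "finH x \<Longrightarrow> concH x oneH = x"
  by (simp add: concH_def bilH_monoH_right linH_monoH_self)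

lemmas concH_add_left = bilH_add_left[of _ _ "\<lambda>u v. monoH (u @ v)", folded concH_def]
lemmas concH_diff_left = bilH_diff_left[of _ _ "\<lambda>u v. monoH (u @ v)", folded concH_def]
lemmas concH_diff_right = bilH_diff_right[of _ _ "\<lambda>u v. monoH (u @ v)", folded concH_def]
lemmas concH_uminus_left = bilH_uminus_left[of "\<lambda>u v. monoH (u @ v)", folded concH_def]
lemmas concH_uminus_right = bilH_uminus_right[of "\<lambda>u v. monoH (u @ v)", folded concH_def]
lemmas concH_scaleH_left = bilH_scaleH_left[of _ "\<lambda>u v. monoH (u @ v)", folded concH_def]
lemmas concH_scaleH_right = bilH_scaleH_right[of _ "\<lambda>u v. monoH (u @ v)", folded concH_def]
lemmas concH_linH_left = bilH_linH_left[of _ _ "\<lambda>u v. monoH (u @ v)", folded concH_def]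
lemmas concH_linH_right = bilH_linH_right[of _ _ "\<lambda>u v. monoH (u @ v)", folded concH_def]
lemmas concH_expand_left = bilH_expand_left[of "\<lambda>u v. monoH (u @ v)", folded concH_def]
lemmas concH_expand_right = bilH_expand_right[of "\<lambda>u v. monoH (u @ v)", folded concH_def]

lemma concH_assoc:
  assumes "finH x" "finH y" "finH z"
  shows "concH (concH x y) z = concH x (concH y z)"
proof -
  have "concH (concH x y) z = linH (\<lambda>u. linH (\<lambda>v. linH (\<lambda>w. monoH (u @ v @ w)) z) y) x"
    using assms by (simp add: concH_def bilH_eq_linH[of _ x y] bilH_linH_left bilH_monoH_left)
  moreover have "concH (monoH u) (concH y z) = linH (\<lambda>v. linH (\<lambda>w. monoH (u @ v @ w)) z) y" for u
    using assms by (simp add: concH_def bilH_eq_linH[of _ y z] bilH_linH_right)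
  then have "concH x (concH y z) = linH (\<lambda>u. linH (\<lambda>v. linH (\<lambda>w. monoH (u @ v @ w)) z) y) x"
    by (simp add: concH_expand_left[of x])
  ultimately show ?thesis
    by simp
qed

lemma appH_eq_concH: "finH x \<Longrightarrow> appH x l = concH x (monoH [l])"
  by (simp add: appH_eq_linH concH_def bilH_monoH_right)

lemma concH_monoH_Cons: "finH x \<Longrightarrow> concH (monoH [l]) x = linH (\<lambda>w. monoH (l # w)) x"
  by (simp add: concH_def bilH_monoH_left)

section \<open>The shuffle product\<close>

lemma shr_Nil_right [simp]: "shr x [] = monoH (rev x)"
  by (cases x) auto

lemma finH_shr [simp]: "finH (shr x y)"
  by (induction x y rule: shr.induct)
    (simp_all only: shr.simps addH_eq_plus finH_appH finH_add finH_scaleH finH_monoH)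

lemma finH_shW [simp]: "finH (shW u v)"
  by (simp add: shW_def)

lemma shW_Nil_left [simp]: "shW [] v = monoH v"
  and shW_Nil_right [simp]: "shW u [] = monoH u"
  by (simp_all add: shW_def)

lemma shr_Lb_left: "shr (Lb # x) y = appH (shr x y) Lb"
  by (cases y) auto

lemma shr_Lb_right: "shr x (Lb # y) = appH (shr x y) Lb"
proof (induction x)
  case (Cons l x)
  then show ?case
    by (cases l) (simp_all add: shr_Lb_left)
qed simp

lemma shW_snoc_Lb_left: "shW (u @ [Lb]) v = appH (shW u v) Lb"
  by (simp add: shW_def shr_Lb_left)

lemma shW_snoc_Lb_right: "shW u (v @ [Lb]) = appH (shW u v) Lb"
  by (simp add: shW_def shr_Lb_right)

lemma shW_snoc_La_La:
  "shW (u @ [La]) (v @ [La]) = appH (shW (u @ [La]) v + shW u (v @ [La]) + scaleH hbar (shW u v)) La"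
  by (simp add: shW_def)

lemma shW_commute: "shW u v = shW v u"
proof (induction "length u + length v" arbitrary: u v rule: less_induct)
  case less
  show ?case
  proof (cases "u = [] \<or> v = []")
    case False
    then obtain u' l v' l' where u: "u = u' @ [l]" and v: "v = v' @ [l']"
      by (metis rev_exhaust)
    show ?thesis
    proof (cases "l = Lb \<or> l' = Lb")
      case True
      then show ?thesis
        using less u v by (auto simp: shW_snoc_Lb_left shW_snoc_Lb_right)
    next
      case False
      then have "l = La" "l' = La"
        by (cases l; cases l'; simp)+
      moreover have "shW u v' = shW v' u" "shW u' v = shW v u'" "shW u' v' = shW v' u'"
        using less u v by auto
      ultimately show ?thesis
        using u v by (simp add: shW_snoc_La_La add_ac)
    qed
  qed auto
qed

lemma shH_monoH_monoH [simp]: "shH (monoH u) (monoH v) = shW u v"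
  by (simp add: shH_def)

lemma finH_shH [simp]: "finH x \<Longrightarrow> finH y \<Longrightarrow> finH (shH x y)"
  by (simp add: shH_def)

lemma shH_commute: "shH x y = shH y x"
  by (simp add: shH_def bilH_eq_linH linH_commute[of _ y x] shW_commute)

lemma shH_one_left [simp]: "finH x \<Longrightarrow> shH oneH x = x"
proof -
  have "shW [] = monoH"
    by (rule ext) simp
  then show "finH x \<Longrightarrow> shH oneH x = x"
    by (simp add: shH_def bilH_monoH_left linH_monoH_self)
qed

lemma shH_one_right [simp]: "finH x \<Longrightarrow> shH x oneH = x"
  using shH_commute[of x oneH] by simp

lemmas shH_add_left = bilH_add_left[of _ _ shW, folded shH_def]
lemmas shH_add_right = bilH_add_right[of _ _ shW, folded shH_def]
lemmas shH_diff_left = bilH_diff_left[of _ _ shW, folded shH_def]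
lemmas shH_diff_right = bilH_diff_right[of _ _ shW, folded shH_def]
lemmas shH_uminus_left = bilH_uminus_left[of shW, folded shH_def]
lemmas shH_uminus_right = bilH_uminus_right[of shW, folded shH_def]
lemmas shH_scaleH_left = bilH_scaleH_left[of _ shW, folded shH_def]
lemmas shH_scaleH_right = bilH_scaleH_right[of _ shW, folded shH_def]
lemmas shH_linH_left = bilH_linH_left[of _ _ shW, folded shH_def]
lemmas shH_linH_right = bilH_linH_right[of _ _ shW, folded shH_def]
lemmas shH_expand_left = bilH_expand_left[of shW, folded shH_def]
lemmas shH_expand_right = bilH_expand_right[of shW, folded shH_def]

lemmas shH_linear = shH_add_left shH_add_right shH_diff_left shH_diff_right
  shH_uminus_left shH_uminus_right shH_scaleH_left shH_scaleH_right

lemma shH_eq_linH: "shH x y = linH (\<lambda>u. linH (shW u) y) x"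
  by (simp add: shH_def bilH_eq_linH)

lemma shH_appH_eq_linH:
  "finH x \<Longrightarrow> finH y \<Longrightarrow>
   shH (appH x l) y = linH (\<lambda>u. linH (\<lambda>v. shW (u @ [l]) v) y) x"
  "finH x \<Longrightarrow> finH y \<Longrightarrow>
   shH x (appH y l) = linH (\<lambda>u. linH (\<lambda>v. shW u (v @ [l])) y) x"
  "finH x \<Longrightarrow> finH y \<Longrightarrow>
   shH (appH x l) (appH y l') = linH (\<lambda>u. linH (\<lambda>v. shW (u @ [l]) (v @ [l'])) y) x"
  by (simp_all add: appH_eq_linH shH_def bilH_eq_linH linH_linH)

lemma shH_appH_Lb_left:
  assumes "finH x" "finH y"
  shows "shH (appH x Lb) y = appH (shH x y) Lb"
  unfolding shH_appH_eq_linH(1)[OF assms] shH_eq_linH[of x y] appH_linH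
  by (intro linH_cong) (simp add: shW_snoc_Lb_left)

lemma shH_appH_Lb_right:
  assumes "finH x" "finH y"
  shows "shH x (appH y Lb) = appH (shH x y) Lb"
  unfolding shH_appH_eq_linH(2)[OF assms] shH_eq_linH[of x y] appH_linH
  by (simp add: shW_snoc_Lb_right)

lemma shH_appH_La_La:
  assumes "finH x" "finH y"
  shows "shH (appH x La) (appH y La) =
    appH (shH (appH x La) y + shH x (appH y La) + scaleH hbar (shH x y)) La"
  unfolding shH_appH_eq_linH[OF assms] shH_eq_linH[of x y] appH_linH appH_add appH_scaleH
  by (simp add: shW_snoc_La_La linH_fun_add linH_fun_scaleH)


lemma shH_assoc_appH_Lb:
  assumes "finH x" "finH y" "finH z" "shH (shH x y) z = shH x (shH y z)"
  shows "shH (shH (appH x Lb) y) z = shH (appH x Lb) (shH y z)"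
    and "shH (shH x (appH y Lb)) z = shH x (shH (appH y Lb) z)"
    and "shH (shH x y) (appH z Lb) = shH x (shH y (appH z Lb))"
  using assms by (simp_all add: shH_appH_Lb_left shH_appH_Lb_right)

lemma shH_assoc_appH_La:
  fixes x y z :: H
  defines "x' \<equiv> appH x La" and "y' \<equiv> appH y La" and "z' \<equiv> appH z La"
  assumes fin: "finH x" "finH y" "finH z"
    and assoc: "shH (shH x' y') z = shH x' (shH y' z)" "shH (shH x' y) z' = shH x' (shH y z')"
      "shH (shH x y') z' = shH x (shH y' z')" "shH (shH x y) z' = shH x (shH y z')"
      "shH (shH x' y) z = shH x' (shH y z)" "shH (shH x y') z = shH x (shH y' z)"
      "shH (shH x y) z = shH x (shH y z)"
  shows "shH (shH x' y') z' = shH x' (shH y' z')"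
proof -
  define P where "P = shH x' y + shH x y' + scaleH hbar (shH x y)"
  define Q where "Q = shH y' z + shH y z' + scaleH hbar (shH y z)"
  have [simp]: "finH x'" "finH y'" "finH z'" "finH P" "finH Q"
    using fin by (simp_all add: P_def Q_def x'_def y'_def z'_def)
  have xy: "shH x' y' = appH P La" and yz: "shH y' z' = appH Q La"
    using fin by (simp_all add: P_def Q_def x'_def y'_def z'_def shH_appH_La_La)
  have "shH (shH x' y') z' = appH (shH (appH P La) z + shH P z' + scaleH hbar (shH P z)) La"
    unfolding xy z'_def using fin by (simp add: shH_appH_La_La)
  also have "\<dots> = appH (shH x' (shH y' z) + shH x' (shH y z') + shH x (shH y' z')
      + scaleH hbar (shH x (shH y z')) + scaleH hbar (shH x' (shH y z))
      + scaleH hbar (shH x (shH y' z)) + scaleH hbar (scaleH hbar (shH x (shH y z)))) La"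
    unfolding xy[symmetric] unfolding P_def using fin by (simp add: shH_linear assoc add_ac)
  also have "\<dots> = appH (shH x' Q + shH x (appH Q La) + scaleH hbar (shH x Q)) La"
    unfolding yz[symmetric] unfolding Q_def using fin by (simp add: shH_linear add_ac)
  also have "\<dots> = shH x' (shH y' z')"
    unfolding yz x'_def using fin by (simp add: shH_appH_La_La)
  finally show ?thesis .
qed

lemma shW_assoc: "shH (shW u v) (monoH w) = shH (monoH u) (shW v w)"
proof (induction "length u + length v + length w" arbitrary: u v w rule: less_induct)
  case less
  have IH: "shH (shH (monoH u') (monoH v')) (monoH w') = shH (monoH u') (shH (monoH v') (monoH w'))"
    if "length u' + length v' + length w' < length u + length v + length w" for u' v' w'
    using less that by simp
  show ?case
  proof (cases "u = [] \<or> v = [] \<or> w = []")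
    case False
    then obtain u' l1 v' l2 w' l3 where u: "u = u' @ [l1]" and v: "v = v' @ [l2]" and w: "w = w' @ [l3]"
      by (metis rev_exhaust)
    consider "l1 = Lb" | "l2 = Lb" | "l3 = Lb" | "l1 = La" "l2 = La" "l3 = La"
      by (cases l1; cases l2; cases l3) auto
    then show ?thesis
    proof cases
      case 1
      then show ?thesis
        using shH_assoc_appH_Lb(1)[OF _ _ _ IH[of u' v w]] u by simp
    next
      case 2
      then show ?thesis
        using shH_assoc_appH_Lb(2)[OF _ _ _ IH[of u v' w]] v by simp
    next
      case 3
      then show ?thesis
        using shH_assoc_appH_Lb(3)[OF _ _ _ IH[of u v w']] w by simp
    next
      case 4
      then show ?thesis
        using shH_assoc_appH_La[of "monoH u'" "monoH v'" "monoH w'"] u v w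
          IH[of u v w'] IH[of u v' w] IH[of u' v w] IH[of u' v' w] IH[of u v' w'] IH[of u' v w']
          IH[of u' v' w']
        by simp
    qed
  qed (use shH_one_left[of "shW v w"] shH_one_right[of "shW u v"] in auto)
qed

lemma shH_assoc:
  assumes "finH x" "finH y" "finH z"
  shows "shH (shH x y) z = shH x (shH y z)"
proof -
  have "shH (shH x y) z = linH (\<lambda>u. linH (\<lambda>v. shH (shW u v) z) y) x"
    using assms by (simp add: shH_eq_linH[of x y] shH_linH_left)
  also have "\<dots> = linH (\<lambda>u. linH (\<lambda>v. linH (\<lambda>w. shH (shW u v) (monoH w)) z) y) x"
    by (subst shH_expand_right) (rule refl)
  also have "\<dots> = linH (\<lambda>u. linH (\<lambda>v. linH (\<lambda>w. shH (monoH u) (shW v w)) z) y) x"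
    by (simp add: shW_assoc)
  also have "\<dots> = shH x (shH y z)"
    using assms by (simp add: shH_expand_left[of x] shH_eq_linH[of y z] shH_linH_right)
  finally show ?thesis .
qed

section \<open>The anti-automorphism \<open>\<rho>\<close> and cut sums\<close>

(* The image of a is written pointwise, exactly as in the definition of psiL; for rewriting
   the form rho_letter_La below is used instead. *)
fun rho_letter :: "letter \<Rightarrow> H" where
  "rho_letter La = (\<lambda>t. - monoH [La] t - hbar * monoH [] t)"
| "rho_letter Lb = monoH [Lb]"

fun rho_word :: "letter list \<Rightarrow> H" where
  "rho_word [] = oneH"
| "rho_word (l # w) = concH (rho_word w) (rho_letter l)"

definition rhoH :: "H \<Rightarrow> H" where
  "rhoH = linH rho_word"

declare rho_letter.simps(1) [simp del]

lemma rho_letter_La: "rho_letter La = - monoH [La] - scaleH hbar oneH"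
  by (simp add: rho_letter.simps fun_eq_iff scaleH_def)

lemma finH_rho_letter [simp]: "finH (rho_letter l)"
  by (cases l) (simp_all add: rho_letter_La)

lemma finH_rho_word [simp]: "finH (rho_word w)"
  by (induction w) simp_all

lemma finH_rhoH [simp]: "finH x \<Longrightarrow> finH (rhoH x)"
  by (simp add: rhoH_def)

lemma rhoH_monoH [simp]: "rhoH (monoH w) = rho_word w"
  by (simp add: rhoH_def)

lemma rho_word_append: "rho_word (u @ v) = concH (rho_word v) (rho_word u)"
  by (induction u) (simp_all add: concH_assoc)

lemma rho_word_snoc: "rho_word (u @ [l]) = concH (rho_letter l) (rho_word u)"
  by (simp add: rho_word_append)

lemma rhoH_concH:
  assumes "finH x" "finH y"
  shows "rhoH (concH x y) = concH (rhoH y) (rhoH x)"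
proof -
  have "rhoH (concH x y) = linH (\<lambda>u. linH (\<lambda>v. concH (rho_word v) (rho_word u)) y) x"
    using assms by (simp add: rhoH_def concH_def bilH_eq_linH linH_linH rho_word_append)
  also have "\<dots> = concH (rhoH y) (rhoH x)"
    using assms by (simp add: rhoH_def concH_linH_left concH_linH_right)
  finally show ?thesis .
qed

lemma rhoH_rho_letter [simp]: "rhoH (rho_letter l) = monoH [l]"
proof (cases l)
  case La
  have "rhoH (rho_letter La) = rhoH (- monoH [La] - scaleH hbar oneH)"
    by (simp only: rho_letter_La)
  also have "\<dots> = - rho_letter La - scaleH hbar oneH"
    by (simp add: rhoH_def linH_diff linH_uminus linH_scaleH)
  also have "\<dots> = monoH [La]"
    by (subst rho_letter_La) simp
  finally show ?thesis
    using La by simp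
qed simp

lemma rhoH_rho_word [simp]: "rhoH (rho_word w) = monoH w"
proof (induction w)
  case (Cons l w)
  then show ?case
    by (simp add: rhoH_concH)
qed (simp add: rhoH_def)

lemma concH_rho_letter_La: "finH x \<Longrightarrow> concH x (rho_letter La) = - appH x La - scaleH hbar x"
  by (simp add: rho_letter_La concH_diff_right concH_uminus_right concH_scaleH_right appH_eq_concH)

lemma rho_letter_La_concH:
  "finH x \<Longrightarrow> concH (rho_letter La) x = - concH (monoH [La]) x - scaleH hbar x"
  by (simp add: rho_letter_La concH_diff_left concH_uminus_left concH_scaleH_left)

text \<open>\<open>bcuts v p q\<close> is the sum of \<open>(p x) sh\<^sub>\<hbar> (q \<rho>(y))\<close> over all factorisations
  \<open>v = x b y\<close>.\<close>

fun bcuts :: "letter list \<Rightarrow> H \<Rightarrow> H \<Rightarrow> H" where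
  "bcuts [] p q = 0"
| "bcuts (Lb # v) p q = shH p (concH q (rho_word v)) + bcuts v (appH p Lb) q"
| "bcuts (La # v) p q = bcuts v (appH p La) q"

definition bcutsH :: "H \<Rightarrow> H \<Rightarrow> H \<Rightarrow> H" where
  "bcutsH x p q = linH (\<lambda>u. bcuts u p q) x"

lemma bcuts_add: "finH p \<Longrightarrow> finH q \<Longrightarrow> finH q' \<Longrightarrow> bcuts v p (q + q') = bcuts v p q + bcuts v p q'"
  by (induction v p q rule: bcuts.induct) (auto simp: concH_add_left shH_add_right add_ac)

lemma bcuts_uminus: "finH p \<Longrightarrow> finH q \<Longrightarrow> bcuts v p (- q) = - bcuts v p q"
  by (induction v p q rule: bcuts.induct) (auto simp: concH_uminus_left shH_uminus_right)

lemma bcuts_scaleH: "finH p \<Longrightarrow> finH q \<Longrightarrow> bcuts v p (scaleH c q) = scaleH c (bcuts v p q)"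
  by (induction v p q rule: bcuts.induct) (auto simp: concH_scaleH_left shH_scaleH_right)

lemma bcuts_diff: "finH p \<Longrightarrow> finH q \<Longrightarrow> finH q' \<Longrightarrow> bcuts v p (q - q') = bcuts v p q - bcuts v p q'"
  using bcuts_add[of p q "- q'" v] by (simp add: bcuts_uminus)

lemma bcuts_snoc_Lb:
  "finH p \<Longrightarrow> finH q \<Longrightarrow> bcuts (v @ [Lb]) p q = shH (concH p (monoH v)) q + bcuts v p (appH q Lb)"
proof (induction v arbitrary: p)
  case (Cons l v)
  have "concH (appH p l) (monoH v) = concH p (monoH (l # v))"
    using Cons.prems by (simp add: appH_eq_concH concH_assoc)
  moreover have "concH q (concH (rho_letter l) (rho_word v)) = concH (appH q Lb) (rho_word v)"
    if "l = Lb"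
    using Cons.prems that by (simp add: appH_eq_concH concH_assoc)
  ultimately show ?case
    using Cons by (cases l) (simp_all add: rho_word_snoc add_ac)
qed simp

lemma bcuts_snoc_La:
  "finH p \<Longrightarrow> finH q \<Longrightarrow> bcuts (v @ [La]) p q = bcuts v p (concH q (rho_letter La))"
proof (induction v arbitrary: p)
  case (Cons l v)
  have "concH q (concH (rho_letter La) (rho_word v)) = concH (concH q (rho_letter La)) (rho_word v)"
    using Cons.prems by (simp add: concH_assoc)
  then show ?case
    using Cons by (cases l) (simp_all add: rho_word_snoc)
qed simp

lemma bcuts_replicate_La:
  "finH p \<Longrightarrow> finH q \<Longrightarrow> bcuts (replicate k La @ w) p q = bcuts w (concH p (monoH (replicate k La))) q"
proof (induction k arbitrary: p)
  case (Suc k)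
  have "concH (appH p La) (monoH (replicate k La)) = concH p (monoH (replicate (Suc k) La))"
    using Suc.prems by (simp add: appH_eq_concH concH_assoc)
  then show ?case
    using Suc by simp
qed simp

lemma bcutsH_monoH [simp]: "bcutsH (monoH u) p q = bcuts u p q"
  by (simp add: bcutsH_def)

lemma bcutsH_add: "finH x \<Longrightarrow> finH y \<Longrightarrow> bcutsH (x + y) p q = bcutsH x p q + bcutsH y p q"
  by (simp add: bcutsH_def linH_add)

lemma bcutsH_diff: "finH x \<Longrightarrow> finH y \<Longrightarrow> bcutsH (x - y) p q = bcutsH x p q - bcutsH y p q"
  by (simp add: bcutsH_def linH_diff)

lemma bcutsH_uminus: "bcutsH (- x) p q = - bcutsH x p q"
  by (simp add: bcutsH_def linH_uminus)

lemma bcutsH_scaleH: "finH x \<Longrightarrow> bcutsH (scaleH c x) p q = scaleH c (bcutsH x p q)"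
  by (simp add: bcutsH_def linH_scaleH)

lemma bcutsH_appH_Lb:
  assumes "finH x" "finH p" "finH q"
  shows "bcutsH (appH x Lb) p q = shH (concH p x) q + bcutsH x p (appH q Lb)"
proof -
  have "bcutsH (appH x Lb) p q = linH (\<lambda>w. bcuts (w @ [Lb]) p q) x"
    unfolding bcutsH_def appH_eq_linH[OF assms(1)] using assms(1)
    by (simp only: linH_linH finH_monoH linH_monoH)
  also have "\<dots> = linH (\<lambda>w. shH (concH p (monoH w)) q + bcuts w p (appH q Lb)) x"
    using assms by (simp only: bcuts_snoc_Lb)
  also have "\<dots> = linH (\<lambda>w. shH (concH p (monoH w)) q) x + bcutsH x p (appH q Lb)"
    unfolding bcutsH_def by (rule linH_fun_add)
  also have "linH (\<lambda>w. shH (concH p (monoH w)) q) x = shH (concH p x) q"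
    unfolding concH_expand_right[of p x] using assms by (simp add: shH_linH_left)
  finally show ?thesis .
qed

lemma bcutsH_appH_La:
  assumes "finH x" "finH p" "finH q"
  shows "bcutsH (appH x La) p q = bcutsH x p (concH q (rho_letter La))"
proof -
  have "bcutsH (appH x La) p q = linH (\<lambda>w. bcuts (w @ [La]) p q) x"
    unfolding bcutsH_def appH_eq_linH[OF assms(1)] using assms(1)
    by (simp only: linH_linH finH_monoH linH_monoH)
  then show ?thesis
    using assms unfolding bcutsH_def by (simp only: bcuts_snoc_La)
qed

lemma bcutsH_Cons_Lb:
  assumes "finH x" "finH p" "finH q"
  shows "bcutsH (concH (monoH [Lb]) x) p q = shH p (concH q (rhoH x)) + bcutsH x (appH p Lb) q"
proof -
  have "bcutsH (concH (monoH [Lb]) x) p q = linH (\<lambda>w. bcuts (Lb # w) p q) x"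
    unfolding bcutsH_def concH_monoH_Cons[OF assms(1)] using assms(1)
    by (simp only: linH_linH finH_monoH linH_monoH)
  also have "\<dots> = linH (\<lambda>w. shH p (concH q (rho_word w))) x + bcutsH x (appH p Lb) q"
    unfolding bcutsH_def bcuts.simps by (rule linH_fun_add)
  also have "linH (\<lambda>w. shH p (concH q (rho_word w))) x = shH p (concH q (rhoH x))"
    using assms by (simp add: rhoH_def concH_linH_right shH_linH_right)
  finally show ?thesis .
qed

lemma bcutsH_Cons_La:
  assumes "finH x" "finH p" "finH q"
  shows "bcutsH (concH (monoH [La]) x) p q = bcutsH x (appH p La) q"
  unfolding bcutsH_def concH_monoH_Cons[OF assms(1)] using assms(1)
  by (simp only: linH_linH finH_monoH linH_monoH bcuts.simps)

lemma bcutsH_concH_monoH: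
  assumes "finH x" "finH p" "finH q"
  shows "bcutsH (concH (monoH u) x) p q = bcuts u p (concH q (rhoH x)) + bcutsH x (concH p (monoH u)) q"
  using assms
proof (induction u arbitrary: p)
  case (Cons l u)
  have split: "concH (monoH (l # u)) x = concH (monoH [l]) (concH (monoH u) x)"
    using Cons.prems by (simp flip: concH_assoc)
  have "concH (appH p l) (monoH u) = concH p (monoH (l # u))"
    using Cons.prems by (simp add: appH_eq_concH concH_assoc)
  moreover have "concH q (rhoH (concH (monoH u) x)) = concH (concH q (rhoH x)) (rho_word u)"
    using Cons.prems by (simp add: rhoH_concH concH_assoc)
  ultimately show ?case
    unfolding split using Cons
    by (cases l) (simp_all add: bcutsH_Cons_La bcutsH_Cons_Lb add_ac)
qed simp

lemma bcutsH_rho_word: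
  "finH p \<Longrightarrow> finH q \<Longrightarrow> bcutsH (rho_word v) p q = bcuts v q p"
proof (induction v arbitrary: p q rule: rev_induct)
  case (snoc l v)
  show ?case
  proof (cases l)
    case Lb
    then show ?thesis
      using snoc by (simp add: rho_word_snoc bcutsH_Cons_Lb bcuts_snoc_Lb shH_commute)
  next
    case La
    have "bcutsH (rho_word (v @ [l])) p q
        = - bcutsH (rho_word v) (appH p La) q - scaleH hbar (bcutsH (rho_word v) p q)"
      using snoc La
      by (simp add: rho_word_snoc rho_letter_La_concH bcutsH_diff bcutsH_uminus bcutsH_scaleH
          bcutsH_Cons_La)
    also have "\<dots> = bcuts (v @ [l]) q p"
      using snoc La
      by (simp add: bcuts_snoc_La concH_rho_letter_La bcuts_diff bcuts_uminus bcuts_scaleH)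
    finally show ?thesis .
  qed
qed simp


lemma shH_appH_La_concH_rho:
  assumes "finH y" "finH s"
  shows "concH (shH (appH y La) s) (rho_letter La) =
    shH (appH y La) (concH s (rho_letter La)) + concH (shH y (concH s (rho_letter La))) (rho_letter La)
    + scaleH hbar (shH y (concH s (rho_letter La)))"
  using assms
  by (simp add: concH_rho_letter_La shH_linear shH_appH_La_La algebra_simps)

lemma bcutsH_shW_snoc_Lb:
  assumes "finH s"
    and IH: "bcutsH (shW x y) oneH (appH s Lb) =
      bcuts x oneH (shH (monoH y) (appH s Lb)) + bcuts y oneH (shH (monoH x) (appH s Lb))"
  shows "bcutsH (shW (x @ [Lb]) y) oneH s =
    bcuts (x @ [Lb]) oneH (shH (monoH y) s) + bcuts y oneH (shH (monoH (x @ [Lb])) s)"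
proof -
  have "bcutsH (shW (x @ [Lb]) y) oneH s = shH (shW x y) s + bcutsH (shW x y) oneH (appH s Lb)"
    using assms by (simp add: shW_snoc_Lb_left bcutsH_appH_Lb)
  also have "\<dots> = shH (monoH x) (shH (monoH y) s) + bcuts x oneH (shH (monoH y) (appH s Lb))
      + bcuts y oneH (shH (monoH x) (appH s Lb))"
    using assms by (simp add: IH add.assoc flip: shH_assoc)
  also have "\<dots> = bcuts (x @ [Lb]) oneH (shH (monoH y) s) + bcuts y oneH (shH (monoH (x @ [Lb])) s)"
    using assms shH_appH_Lb_left[of "monoH x" s]
    by (simp add: bcuts_snoc_Lb shH_appH_Lb_right)
  finally show ?thesis .
qed

lemma bcutsH_shW_snoc_La_La:
  fixes x y :: "letter list" and s :: H
  defines "s' \<equiv> concH s (rho_letter La)"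
  assumes "finH s"
    and IH: "bcutsH (shW (x @ [La]) y) oneH s' =
        bcuts (x @ [La]) oneH (shH (monoH y) s') + bcuts y oneH (shH (monoH (x @ [La])) s')"
      "bcutsH (shW x (y @ [La])) oneH s' =
        bcuts x oneH (shH (monoH (y @ [La])) s') + bcuts (y @ [La]) oneH (shH (monoH x) s')"
      "bcutsH (shW x y) oneH s' = bcuts x oneH (shH (monoH y) s') + bcuts y oneH (shH (monoH x) s')"
  shows "bcutsH (shW (x @ [La]) (y @ [La])) oneH s =
    bcuts (x @ [La]) oneH (shH (monoH (y @ [La])) s) + bcuts (y @ [La]) oneH (shH (monoH (x @ [La])) s)"
proof -
  have [simp]: "finH s'"
    using assms by (simp add: s'_def)
  have "bcutsH (shW (x @ [La]) (y @ [La])) oneH s = bcutsH (shW (x @ [La]) y) oneH s'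
      + bcutsH (shW x (y @ [La])) oneH s' + scaleH hbar (bcutsH (shW x y) oneH s')"
    using assms by (simp add: shW_snoc_La_La bcutsH_appH_La bcutsH_add bcutsH_scaleH)
  also have "\<dots> = bcuts x oneH (concH (shH (monoH y) s') (rho_letter La) + shH (monoH (y @ [La])) s'
        + scaleH hbar (shH (monoH y) s'))
      + bcuts y oneH (concH (shH (monoH x) s') (rho_letter La) + shH (monoH (x @ [La])) s'
        + scaleH hbar (shH (monoH x) s'))"
    by (simp add: IH bcuts_snoc_La bcuts_add bcuts_scaleH add_ac)
  also have "\<dots> = bcuts x oneH (concH (shH (monoH (y @ [La])) s) (rho_letter La))
      + bcuts y oneH (concH (shH (monoH (x @ [La])) s) (rho_letter La))"
    using assms shH_appH_La_concH_rho[of "monoH x" s] shH_appH_La_concH_rho[of "monoH y" s]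
    by (simp add: add_ac)
  also have "\<dots> = bcuts (x @ [La]) oneH (shH (monoH (y @ [La])) s)
      + bcuts (y @ [La]) oneH (shH (monoH (x @ [La])) s)"
    using assms by (simp add: bcuts_snoc_La)
  finally show ?thesis .
qed

lemma bcutsH_shW:
  "finH s \<Longrightarrow>
   bcutsH (shW x y) oneH s = bcuts x oneH (shH (monoH y) s) + bcuts y oneH (shH (monoH x) s)"
proof (induction "length x + length y" arbitrary: x y s rule: less_induct)
  case less
  show ?case
  proof (cases "x = [] \<or> y = []")
    case False
    then obtain x' l y' l' where x: "x = x' @ [l]" and y: "y = y' @ [l']"
      by (metis rev_exhaust)
    consider "l = Lb" | "l' = Lb" | "l = La" "l' = La"
      by (cases l; cases l') auto
    then show ?thesis
    proof cases
      case 1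
      then show ?thesis
        using bcutsH_shW_snoc_Lb[OF less.prems less(1)[of x' y]] x less.prems by simp
    next
      case 2
      then show ?thesis
        using bcutsH_shW_snoc_Lb[OF less.prems less(1)[of y' x]] y less.prems
        by (simp add: shW_commute add.commute)
    next
      case 3
      then show ?thesis
        using bcutsH_shW_snoc_La_La[OF less.prems less(1) less(1) less(1)] x y less.prems
        by simp
    qed
  qed (use less.prems in auto)
qed

section \<open>The identity on letter words\<close>

fun psi_letters :: "letter list \<Rightarrow> H" where
  "psi_letters [] = oneH"
| "psi_letters (Lb # y) = concH (monoH [Lb]) (rho_word y)"
| "psi_letters (La # y) = 0"

text \<open>\<open>wS_letters u\<close> is \<open>w\<^sup>S\<close> without its power of \<open>\<hbar>\<close> (see \<open>wSW_eq\<close>): the sum of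
  \<open>x sh\<^sub>\<hbar> \<psi>(y)\<close> over \<open>u = x y\<close> with \<open>y\<close> empty (the term \<open>monoH u\<close>) or \<open>y = b z\<close>
  (the cut sum, as \<open>\<psi>(b z) = b \<rho>(z)\<close>).\<close>

definition wS_letters :: "letter list \<Rightarrow> H" where
  "wS_letters u = monoH u + bcuts u oneH (monoH [Lb])"

definition is_Aword :: "letter list \<Rightarrow> bool" where
  "is_Aword u \<longleftrightarrow> u = [] \<or> hd u = Lb"

lemma finH_psi_letters [simp]: "finH (psi_letters y)"
  by (cases y rule: psi_letters.cases) simp_all

lemma linH_wS_letters: "finH x \<Longrightarrow> linH wS_letters x = x + bcutsH x oneH (monoH [Lb])"
  unfolding wS_letters_def bcutsH_def by (simp add: linH_fun_add linH_monoH_self)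

lemma wS_letters_shW:
  assumes "is_Aword y"
  shows "linH wS_letters (shW x y) = linH wS_letters (concH (monoH x) (psi_letters y))"
proof (cases y)
  case (Cons l y')
  with assms have y: "y = Lb # y'"
    by (simp add: is_Aword_def)
  define z where "z = concH (monoH (x @ [Lb])) (rho_word y')"
  have [simp]: "finH z"
    by (simp add: z_def)
  have xy: "concH (monoH x) (psi_letters y) = z"
    by (simp add: y z_def flip: concH_assoc)
  have "bcutsH z oneH (monoH [Lb]) = bcuts (x @ [Lb]) oneH (monoH y) + bcuts y' (monoH [Lb]) (monoH (x @ [Lb]))"
    unfolding z_def by (simp add: bcutsH_concH_monoH bcutsH_rho_word y)
  also have "\<dots> = shW x y + bcuts x oneH (monoH (y @ [Lb])) + bcuts y' (monoH [Lb]) (monoH (x @ [Lb]))"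
    by (simp add: bcuts_snoc_Lb)
  finally have z: "bcutsH z oneH (monoH [Lb])
      = shW x y + bcuts x oneH (monoH (y @ [Lb])) + bcuts y' (monoH [Lb]) (monoH (x @ [Lb]))" .
  have "linH wS_letters (shW x y)
      = shW x y + bcuts x oneH (monoH (y @ [Lb])) + bcuts y oneH (monoH (x @ [Lb]))"
    using shW_snoc_Lb_right[of _ "[]"]
    by (simp add: linH_wS_letters bcutsH_shW add.assoc)
  also have "\<dots> = linH wS_letters (concH (monoH x) (psi_letters y))"
  proof -
    have "bcuts y oneH (monoH (x @ [Lb])) = z + bcuts y' (monoH [Lb]) (monoH (x @ [Lb]))"
      by (simp add: y z_def)
    then show ?thesis
      unfolding xy by (simp add: linH_wS_letters z add_ac)
  qed
  finally show ?thesis .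
qed simp

lemma wS_letters_shH:
  assumes "finH x" "finH y" "\<And>v. v \<in> suppH y \<Longrightarrow> is_Aword v"
  shows "linH wS_letters (shH x y) = linH wS_letters (concH x (linH psi_letters y))"
proof -
  have "linH wS_letters (shH x y) = linH (\<lambda>u. linH (\<lambda>v. linH wS_letters (shW u v)) y) x"
    using assms by (simp add: shH_eq_linH linH_linH)
  also have "\<dots> = linH (\<lambda>u. linH (\<lambda>v. linH wS_letters (concH (monoH u) (psi_letters v))) y) x"
    by (intro linH_cong) (simp add: wS_letters_shW assms)
  also have "\<dots> = linH wS_letters (concH x (linH psi_letters y))"
    using assms by (simp add: concH_expand_left[of x] concH_linH_right linH_linH)
  finally show ?thesis .
qed

section \<open>Words in the alphabet \<open>A\<close> and their \<open>\<hbar>\<close>-weight\<close>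

lemma wordA_Nil [simp]: "wordA [] = []"
  and wordA_Cons [simp]: "wordA (k # \<beta>) = Lb # replicate k La @ wordA \<beta>"
  and wordA_append [simp]: "wordA (\<alpha> @ \<beta>) = wordA \<alpha> @ wordA \<beta>"
  by (simp_all add: wordA_def)

lemma is_Aword_Nil [simp]: "is_Aword []"
  and is_Aword_Cons [simp]: "is_Aword (l # w) \<longleftrightarrow> l = Lb"
  by (simp_all add: is_Aword_def)

lemma is_Aword_wordA [simp]: "is_Aword (wordA \<alpha>)"
  by (cases \<alpha>) simp_all

lemma is_Aword_snoc: "is_Aword (t @ [l]) \<longleftrightarrow> (t = [] \<and> l = Lb) \<or> (t \<noteq> [] \<and> is_Aword t)"
  by (cases t) auto

lemma is_Aword_append: "is_Aword u \<Longrightarrow> is_Aword v \<Longrightarrow> is_Aword (u @ v)"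
  by (cases u) auto

lemma replicate_La_append_inj:
  "replicate k La @ u = replicate k' La @ v \<Longrightarrow> is_Aword u \<Longrightarrow> is_Aword v \<Longrightarrow> k = k' \<and> u = v"
proof (induction k arbitrary: k')
  case 0
  then show ?case by (cases k') (auto simp: is_Aword_def)
next
  case (Suc k)
  then show ?case by (cases k') (auto simp: is_Aword_def)
qed

lemma inj_wordA: "inj wordA"
proof (rule injI)
  show "wordA \<alpha> = wordA \<beta> \<Longrightarrow> \<alpha> = \<beta>" for \<alpha> \<beta>
  proof (induction \<alpha> arbitrary: \<beta>)
    case Nil
    then show ?case by (cases \<beta>) auto
  next
    case (Cons k \<alpha>)
    then obtain k' \<beta>' where \<beta>: "\<beta> = k' # \<beta>'"
      by (cases \<beta>) auto
    with Cons.prems have "k = k' \<and> wordA \<alpha> = wordA \<beta>'"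
      by (intro replicate_La_append_inj) auto
    then show ?case
      using Cons.IH \<beta> by auto
  qed
qed

lemma is_Aword_iff_wordA: "is_Aword u \<longleftrightarrow> u \<in> range wordA"
proof
  show "is_Aword u \<Longrightarrow> u \<in> range wordA"
  proof (induction u rule: rev_induct)
    case (snoc l t)
    show ?case
    proof (cases "t = []")
      case True
      then show ?thesis
        using snoc.prems by (auto simp: is_Aword_snoc intro: range_eqI[of _ _ "[0]"])
    next
      case False
      then obtain \<alpha> where \<alpha>: "t = wordA \<alpha>"
        using snoc by (auto simp: is_Aword_snoc)
      show ?thesis
      proof (cases l)
        case La
        from False \<alpha> obtain \<beta> k where "\<alpha> = \<beta> @ [k]"
          by (cases \<alpha> rule: rev_cases) auto
        then have "t @ [l] = wordA (\<beta> @ [Suc k])"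
          using \<alpha> La by (simp add: replicate_append_same)
        then show ?thesis by blast
      next
        case Lb
        then have "t @ [l] = wordA (\<alpha> @ [0])"
          using \<alpha> by simp
        then show ?thesis by blast
      qed
    qed
  qed (metis rangeI wordA_Nil)
qed auto

text \<open>\<open>hbar_weight u\<close> is the number of letters \<open>b\<close> of \<open>u\<close> not followed by \<open>a\<close>, computed on
  the reversed word. On \<open>wordA \<alpha>\<close> it counts the letters \<open>\<hbar> b\<close> of \<open>\<alpha>\<close>, i.e. the power
  of \<open>\<hbar>\<close> built into \<open>embA \<alpha>\<close>.\<close>

fun hbar_weight_rev :: "letter list \<Rightarrow> nat" where
  "hbar_weight_rev [] = 0"
| "hbar_weight_rev (Lb # r) = Suc (hbar_weight_rev r)"
| "hbar_weight_rev [La] = 0"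
| "hbar_weight_rev (La # Lb # r) = hbar_weight_rev r"
| "hbar_weight_rev (La # La # r) = hbar_weight_rev (La # r)"

definition hbar_weight :: "letter list \<Rightarrow> nat" where
  "hbar_weight u = hbar_weight_rev (rev u)"

definition ends_Lb :: "letter list \<Rightarrow> bool" where
  "ends_Lb t \<longleftrightarrow> t \<noteq> [] \<and> last t = Lb"

definition nzeros :: "nat list \<Rightarrow> nat" where
  "nzeros \<alpha> = length (filter (\<lambda>k. k = 0) \<alpha>)"

lemma nzeros_Nil [simp]: "nzeros [] = 0"
  and nzeros_Cons [simp]: "nzeros (k # \<beta>) = (if k = 0 then Suc (nzeros \<beta>) else nzeros \<beta>)"
  and nzeros_append: "nzeros (\<alpha> @ \<beta>) = nzeros \<alpha> + nzeros \<beta>"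
  by (simp_all add: nzeros_def)

lemma ends_Lb_snoc [simp]: "ends_Lb (t @ [l]) \<longleftrightarrow> l = Lb"
  and ends_Lb_Nil [simp]: "\<not> ends_Lb []"
  by (simp_all add: ends_Lb_def)

lemma ends_Lb_iff: "ends_Lb t \<longleftrightarrow> (\<exists>t'. t = t' @ [Lb])"
  by (cases t rule: rev_cases) auto

lemma hbar_weight_Nil [simp]: "hbar_weight [] = 0"
  and hbar_weight_snoc_Lb [simp]: "hbar_weight (t @ [Lb]) = Suc (hbar_weight t)"
  by (simp_all add: hbar_weight_def)

lemma hbar_weight_snoc_La: "hbar_weight (t @ [La]) + of_bool (ends_Lb t) = hbar_weight t"
  by (cases t rule: rev_cases; cases "last t") (auto simp: hbar_weight_def)

lemma hbar_weight_Lb_replicate: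
  "hbar_weight (t @ Lb # replicate k La) = hbar_weight t + of_bool (k = 0)"
proof (induction k)
  case (Suc k)
  then show ?case
    using hbar_weight_snoc_La[of "t @ Lb # replicate k La"]
    by (cases k) (auto simp: replicate_append_same ends_Lb_def split: if_split_asm)
qed simp

lemma hbar_weight_wordA [simp]: "hbar_weight (wordA \<alpha>) = nzeros \<alpha>"
  by (induction \<alpha> rule: rev_induct) (simp_all add: hbar_weight_Lb_replicate nzeros_append)

lemma hbar_weight_append_wordA: "hbar_weight (u @ wordA \<alpha>) = hbar_weight u + nzeros \<alpha>"
  by (induction \<alpha> rule: rev_induct)
    (simp_all add: hbar_weight_Lb_replicate nzeros_append flip: append_assoc)

lemma hbar_weight_append: "is_Aword v \<Longrightarrow> hbar_weight (u @ v) = hbar_weight u + hbar_weight v"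
  by (auto simp: is_Aword_iff_wordA hbar_weight_append_wordA)

section \<open>An intrinsic description of \<open>C\<langle>A\<rangle>\<close>\<close>

lemma appH_Nil [simp]: "appH x l [] = 0"
  and appH_snoc [simp]: "appH x l (t @ [l']) = (if l' = l then x t else 0)"
  by (simp_all add: appH_def)

lemma appH_nonzero: "appH x l t \<noteq> 0 \<Longrightarrow> \<exists>t'. t = t' @ [l] \<and> x t' \<noteq> 0"
  by (cases t rule: rev_cases) (auto split: if_splits)

lemma shW_at_Nil: "shW u v [] \<noteq> 0 \<Longrightarrow> u = [] \<and> v = []"
  by (cases u rule: rev_cases; cases v rule: rev_cases; cases "last u"; cases "last v")
    (auto simp: monoH_def shW_snoc_Lb_left shW_snoc_Lb_right shW_snoc_La_La scaleH_def)

lemma shW_snoc_Lb_nonzero: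
  "shW (u @ [Lb]) v t \<noteq> 0 \<Longrightarrow> \<exists>t'. t = t' @ [Lb] \<and> shW u v t' \<noteq> 0"
  "shW u (v @ [Lb]) t \<noteq> 0 \<Longrightarrow> \<exists>t'. t = t' @ [Lb] \<and> shW u v t' \<noteq> 0"
  by (auto simp: shW_snoc_Lb_left shW_snoc_Lb_right dest: appH_nonzero)

lemma shW_snoc_La_La_nonzero:
  assumes "shW (u @ [La]) (v @ [La]) t \<noteq> 0"
  shows "\<exists>t'. t = t' @ [La] \<and>
    (shW (u @ [La]) v t' \<noteq> 0 \<or> shW u (v @ [La]) t' \<noteq> 0 \<or> shW u v t' \<noteq> 0)"
proof -
  obtain t' where "t = t' @ [La]"
    and "(shW (u @ [La]) v + shW u (v @ [La]) + scaleH hbar (shW u v)) t' \<noteq> 0"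
    using assms unfolding shW_snoc_La_La by (blast dest: appH_nonzero)
  then show ?thesis
    by (auto simp: scaleH_def)
qed

lemma shW_ends_Lb: "ends_Lb u \<or> ends_Lb v \<Longrightarrow> shW u v t \<noteq> 0 \<Longrightarrow> ends_Lb t"
  by (auto simp: ends_Lb_iff dest: shW_snoc_Lb_nonzero)

lemma shW_is_Aword:
  "is_Aword u \<Longrightarrow> is_Aword v \<Longrightarrow> shW u v t \<noteq> 0 \<Longrightarrow> is_Aword t"
proof (induction "length u + length v" arbitrary: u v t rule: less_induct)
  case less
  show ?case
  proof (cases "u = [] \<or> v = []")
    case False
    then obtain u' l v' l' where u: "u = u' @ [l]" and v: "v = v' @ [l']"
      by (metis rev_exhaust)
    have Au: "is_Aword u'" and Av: "is_Aword v'"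
      using less.prems u v by (auto simp: is_Aword_snoc)
    consider "l = Lb" | "l' = Lb" | "l = La" "l' = La"
      by (cases l; cases l') auto
    then show ?thesis
    proof cases
      case 1
      then obtain t' where "t = t' @ [Lb]" "shW u' v t' \<noteq> 0"
        using less.prems u shW_snoc_Lb_nonzero(1) by blast
      then show ?thesis
        using less(1)[of u' v t'] Au less.prems u by (auto simp: is_Aword_snoc)
    next
      case 2
      then obtain t' where "t = t' @ [Lb]" "shW u v' t' \<noteq> 0"
        using less.prems v shW_snoc_Lb_nonzero(2) by blast
      then show ?thesis
        using less(1)[of u v' t'] Av less.prems v by (auto simp: is_Aword_snoc)
    next
      case 3
      then have "u' \<noteq> []" "v' \<noteq> []"
        using less.prems u v by (auto simp: is_Aword_snoc)
      obtain t' where t: "t = t' @ [La]" and "shW u v' t' \<noteq> 0 \<or> shW u' v t' \<noteq> 0 \<or> shW u' v' t' \<noteq> 0"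
        using shW_snoc_La_La_nonzero[of u' v' t] less.prems u v 3 by blast
      then have "is_Aword t' \<and> t' \<noteq> []"
        using less(1)[of u v' t'] less(1)[of u' v t'] less(1)[of u' v' t'] less.prems u v Au Av
          \<open>u' \<noteq> []\<close> \<open>v' \<noteq> []\<close> shW_at_Nil[of u v'] shW_at_Nil[of u' v] shW_at_Nil[of u' v']
        by auto
      then show ?thesis
        using t by (simp add: is_Aword_snoc)
    qed
  qed (use less.prems in \<open>auto simp: monoH_def split: if_splits\<close>)
qed

lemma power_dvd_mult_power_shift:
  fixes h c :: "'a::idom"
  assumes "h \<noteq> 0" "h ^ a dvd h ^ b * c" "a' + b \<le> a + b'"
  shows "h ^ a' dvd h ^ b' * c"
proof (cases "b \<le> a")
  case True
  have "h ^ b * h ^ (a - b) dvd h ^ b * c"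
    using assms(2) True by (simp flip: power_add)
  then have "h ^ (a - b) dvd c"
    using assms(1) by simp
  moreover have "h ^ a' dvd h ^ b' * h ^ (a - b)"
    using assms(3) True by (simp add: le_imp_power_dvd flip: power_add)
  ultimately show ?thesis
    by (meson dvd_trans mult_dvd_mono dvd_refl)
next
  case False
  then have "h ^ a' dvd h ^ b'"
    using assms(3) by (intro le_imp_power_dvd) simp
  then show ?thesis
    by simp
qed

lemma hbar_nonzero [simp]: "hbar \<noteq> 0"
  by (simp add: hbar_def)

lemma shW_hbar_dvd_snoc_Lb:
  assumes IH: "\<And>t. hbar ^ hbar_weight t dvd hbar ^ (hbar_weight u + hbar_weight v) * shW u v t"
  shows "hbar ^ hbar_weight t dvd hbar ^ (hbar_weight (u @ [Lb]) + hbar_weight v) * shW (u @ [Lb]) v t"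
proof (cases t rule: rev_cases)
  case (snoc t' l)
  have "hbar * hbar ^ hbar_weight t' dvd hbar * (hbar ^ (hbar_weight u + hbar_weight v) * shW u v t')"
    using IH by (rule mult_dvd_mono[OF dvd_refl])
  then show ?thesis
    using snoc by (simp add: shW_snoc_Lb_left mult.assoc)
qed simp

lemma shW_hbar_dvd_snoc_La_La:
  fixes u v :: "letter list"
  defines "w \<equiv> \<lambda>x. hbar_weight x"
  assumes IH: "\<And>x y t. (x, y) \<in> {(u @ [La], v), (u, v @ [La]), (u, v)} \<Longrightarrow>
      hbar ^ w t dvd hbar ^ (w x + w y) * shW x y t"
  shows "hbar ^ w t dvd hbar ^ (w (u @ [La]) + w (v @ [La])) * shW (u @ [La]) (v @ [La]) t"
proof (cases t rule: rev_cases)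
  case (snoc t' l)
  let ?A = "shW (u @ [La]) v t'" and ?B = "shW u (v @ [La]) t'" and ?C = "shW u v t'"
  have weights: "w (u @ [La]) + of_bool (ends_Lb u) = w u" "w (v @ [La]) + of_bool (ends_Lb v) = w v"
    "w (t' @ [La]) + of_bool (ends_Lb t') = w t'"
    unfolding w_def by (rule hbar_weight_snoc_La)+
  have "hbar ^ w (t' @ [La]) dvd hbar ^ (w (u @ [La]) + w (v @ [La])) * ?A"
  proof (cases "?A = 0")
    case False
    then have "ends_Lb v \<Longrightarrow> ends_Lb t'"
      using shW_ends_Lb by blast
    then show ?thesis
      using weights by (intro power_dvd_mult_power_shift[OF _ IH]) (auto simp: of_bool_def split: if_splits)
  qed simp
  moreover have "hbar ^ w (t' @ [La]) dvd hbar ^ (w (u @ [La]) + w (v @ [La])) * ?B"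
  proof (cases "?B = 0")
    case False
    then have "ends_Lb u \<Longrightarrow> ends_Lb t'"
      using shW_ends_Lb by blast
    then show ?thesis
      using weights by (intro power_dvd_mult_power_shift[OF _ IH]) (auto simp: of_bool_def split: if_splits)
  qed simp
  moreover have "hbar ^ w (t' @ [La]) dvd hbar ^ (Suc (w (u @ [La]) + w (v @ [La]))) * ?C"
  proof (cases "?C = 0")
    case False
    then have "ends_Lb u \<or> ends_Lb v \<Longrightarrow> ends_Lb t'"
      using shW_ends_Lb by blast
    then show ?thesis
      using weights by (intro power_dvd_mult_power_shift[OF _ IH]) (auto simp: of_bool_def split: if_splits)
  qed simp
  ultimately show ?thesis
    using snoc by (auto simp: shW_snoc_La_La scaleH_def distrib_left mult.assoc mult.left_commute
        intro!: dvd_add)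
qed (simp add: w_def)

lemma shW_hbar_dvd:
  "hbar ^ hbar_weight t dvd hbar ^ (hbar_weight u + hbar_weight v) * shW u v t"
proof (induction "length u + length v" arbitrary: u v t rule: less_induct)
  case less
  show ?case
  proof (cases "u = [] \<or> v = []")
    case False
    then obtain u' l v' l' where u: "u = u' @ [l]" and v: "v = v' @ [l']"
      by (metis rev_exhaust)
    consider "l = Lb" | "l' = Lb" | "l = La" "l' = La"
      by (cases l; cases l') auto
    then show ?thesis
    proof cases
      case 1
      then show ?thesis
        using shW_hbar_dvd_snoc_Lb[OF less(1)[of u' v]] u by simp
    next
      case 2
      then show ?thesis
        using shW_hbar_dvd_snoc_Lb[OF less(1)[of v' u]] v by (simp add: shW_commute add.commute)
    next
      case 3
      then show ?thesis
        using shW_hbar_dvd_snoc_La_La[of u' v'] less(1) u v by fastforce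
    qed
  qed (auto simp: monoH_def)
qed


definition isCA :: "H \<Rightarrow> bool" where
  "isCA x \<longleftrightarrow> finH x \<and> (\<forall>u. x u \<noteq> 0 \<longrightarrow> is_Aword u) \<and> (\<forall>u. hbar ^ hbar_weight u dvd x u)"

lemma isCA_finH: "isCA x \<Longrightarrow> finH x"
  and isCA_is_Aword: "isCA x \<Longrightarrow> u \<in> suppH x \<Longrightarrow> is_Aword u"
  and isCA_hbar_dvd: "isCA x \<Longrightarrow> hbar ^ hbar_weight u dvd x u"
  by (simp_all add: isCA_def suppH_def)

lemma sum_nonzero_ex: "(\<Sum>x\<in>A. f x) \<noteq> (0::'b::comm_monoid_add) \<Longrightarrow> \<exists>x\<in>A. f x \<noteq> 0"
  by (meson sum.neutral)

lemma isCA_shH: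
  assumes "isCA x" "isCA y"
  shows "isCA (shH x y)"
  unfolding isCA_def
proof (intro conjI allI impI)
  show "finH (shH x y)"
    using assms by (simp add: isCA_finH)
next
  fix t assume "shH x y t \<noteq> 0"
  then obtain u v where "u \<in> suppH x" "v \<in> suppH y" "x u * y v * shW u v t \<noteq> 0"
    unfolding shH_def bilH_def by (blast dest: sum_nonzero_ex)
  then show "is_Aword t"
    using assms shW_is_Aword[of u v t] by (auto simp: isCA_def suppH_def)
next
  fix t
  have "hbar ^ hbar_weight t dvd x u * y v * shW u v t" for u v
  proof -
    obtain a b where "x u = hbar ^ hbar_weight u * a" "y v = hbar ^ hbar_weight v * b"
      using assms by (meson isCA_hbar_dvd dvdE)
    then have "x u * y v * shW u v t = (a * b) * (hbar ^ (hbar_weight u + hbar_weight v) * shW u v t)"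
      by (simp add: power_add algebra_simps)
    then show ?thesis
      by (simp only: dvd_mult shW_hbar_dvd)
  qed
  then show "hbar ^ hbar_weight t dvd shH x y t"
    unfolding shH_def bilH_def by (intro dvd_sum)
qed

lemma isCA_concH:
  assumes "isCA x" "isCA y"
  shows "isCA (concH x y)"
  unfolding isCA_def
proof (intro conjI allI impI)
  show "finH (concH x y)"
    using assms by (simp add: isCA_finH)
next
  fix t assume "concH x y t \<noteq> 0"
  then obtain u v where "u \<in> suppH x" "v \<in> suppH y" "x u * y v * monoH (u @ v) t \<noteq> 0"
    unfolding concH_def bilH_def by (blast dest: sum_nonzero_ex)
  then have "x u \<noteq> 0" "y v \<noteq> 0" "t = u @ v"
    by (auto simp: suppH_def monoH_def split: if_splits)
  then show "is_Aword t"
    using assms by (auto simp: isCA_def is_Aword_append)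
next
  fix t
  have "hbar ^ hbar_weight t dvd x u * y v * monoH (u @ v) t" for u v
  proof (cases "t = u @ v \<and> y v \<noteq> 0")
    case True
    then have "hbar_weight t = hbar_weight u + hbar_weight v"
      using assms by (simp add: isCA_def hbar_weight_append)
    then show ?thesis
      using True assms by (simp add: monoH_def power_add mult_dvd_mono isCA_hbar_dvd)
  qed (auto simp: monoH_def)
  then show "hbar ^ hbar_weight t dvd concH x y t"
    unfolding concH_def bilH_def by (intro dvd_sum)
qed

lemma isCA_add: "isCA x \<Longrightarrow> isCA y \<Longrightarrow> isCA (x + y)"
  unfolding isCA_def by (auto intro: dvd_add) (metis add.right_neutral)

lemma isCA_uminus: "isCA x \<Longrightarrow> isCA (- x)"
  by (auto simp: isCA_def)

lemma isCA_diff: "isCA x \<Longrightarrow> isCA y \<Longrightarrow> isCA (x - y)"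
  using isCA_add[of x "- y"] by (simp add: isCA_uminus)

lemma isCA_oneH: "isCA oneH"
  using finH_monoH[of "[]"] unfolding isCA_def by (auto simp: monoH_def)

lemma embA_apply: "embA \<alpha> t = (if t = wordA \<alpha> then hbar ^ nzeros \<alpha> else 0)"
  by (simp add: embA_def scaleH_def monoH_def nzeros_def)

lemma isCA_embA: "isCA (embA \<alpha>)"
proof -
  have "finH (embA \<alpha>)"
    by (simp add: embA_def)
  then show ?thesis
    by (simp add: isCA_def embA_apply)
qed

lemma isCA_sum:
  assumes "finite S" "\<And>a. a \<in> S \<Longrightarrow> isCA (f a)"
  shows "isCA (\<lambda>t. \<Sum>a\<in>S. c a * f a t)"
  unfolding isCA_def
proof (intro conjI allI impI)
  have "suppH (\<lambda>t. \<Sum>a\<in>S. c a * f a t) \<subseteq> (\<Union>a\<in>S. suppH (f a))"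
    by (force simp: suppH_def dest: sum_nonzero_ex)
  moreover have "finite (\<Union>a\<in>S. suppH (f a))"
    using assms by (auto simp: isCA_def finH_def)
  ultimately show "finH (\<lambda>t. \<Sum>a\<in>S. c a * f a t)"
    unfolding finH_def by (rule finite_subset)
next
  fix t assume "(\<Sum>a\<in>S. c a * f a t) \<noteq> 0"
  then obtain a where "a \<in> S" "f a t \<noteq> 0"
    by (auto dest: sum_nonzero_ex)
  then show "is_Aword t"
    using assms by (auto simp: isCA_def)
next
  fix t show "hbar ^ hbar_weight t dvd (\<Sum>a\<in>S. c a * f a t)"
    using assms by (auto intro!: dvd_sum simp: isCA_def)
qed

text \<open>Since \<open>wordA\<close> is injective and \<open>embA \<alpha>\<close> has the single coefficient \<open>\<hbar>^nzeros \<alpha>\<close>,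
  the coefficients of \<open>x \<in> C\<langle>A\<rangle>\<close> are recovered by division.\<close>

definition coeffA :: "H \<Rightarrow> nat list \<Rightarrow> rat poly" where
  "coeffA x \<alpha> = x (wordA \<alpha>) div hbar ^ nzeros \<alpha>"

lemma Arep_apply_wordA: "Arep x c \<Longrightarrow> x (wordA \<alpha>) = c \<alpha> * hbar ^ nzeros \<alpha>"
proof -
  assume x: "Arep x c"
  have "x (wordA \<alpha>) = (\<Sum>\<beta>\<in>{\<alpha>. c \<alpha> \<noteq> 0}. c \<beta> * embA \<beta> (wordA \<alpha>))"
    using x by (simp add: Arep_def)
  also have "\<dots> = (\<Sum>\<beta>\<in>{\<alpha>. c \<alpha> \<noteq> 0}. if \<beta> = \<alpha> then c \<beta> * hbar ^ nzeros \<beta> else 0)"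
    by (intro sum.cong) (auto simp: embA_apply inj_eq[OF inj_wordA])
  also have "\<dots> = c \<alpha> * hbar ^ nzeros \<alpha>"
    using x by (simp add: Arep_def sum.delta)
  finally show ?thesis .
qed

lemma Arep_coeffA: "Arep x c \<Longrightarrow> c = coeffA x"
  by (rule ext) (simp add: coeffA_def Arep_apply_wordA)

lemma coeffA_mult: "isCA x \<Longrightarrow> coeffA x \<alpha> * hbar ^ nzeros \<alpha> = x (wordA \<alpha>)"
  using isCA_hbar_dvd[of x "wordA \<alpha>"] by (simp add: coeffA_def dvd_div_mult_self)

lemma coeffA_nonzero_iff: "isCA x \<Longrightarrow> coeffA x \<alpha> \<noteq> 0 \<longleftrightarrow> x (wordA \<alpha>) \<noteq> 0"
  by (metis coeffA_mult hbar_nonzero mult_eq_0_iff power_not_zero)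

lemma suppH_eq_wordA_image:
  assumes "isCA x"
  shows "suppH x = wordA ` {\<alpha>. coeffA x \<alpha> \<noteq> 0}"
  using isCA_is_Aword[OF assms] coeffA_nonzero_iff[OF assms]
  by (auto simp: suppH_def is_Aword_iff_wordA)

lemma finite_coeffA: "isCA x \<Longrightarrow> finite {\<alpha>. coeffA x \<alpha> \<noteq> 0}"
  using suppH_eq_wordA_image[of x] isCA_finH[of x] inj_wordA
  by (simp add: finH_def finite_image_iff inj_on_subset)

lemma isCA_Arep:
  assumes "isCA x"
  shows "Arep x (coeffA x)"
  unfolding Arep_def
proof (intro conjI ext)
  show S: "finite {\<alpha>. coeffA x \<alpha> \<noteq> 0}"
    using assms by (rule finite_coeffA)
  fix t
  show "x t = (\<Sum>\<alpha>\<in>{\<alpha>. coeffA x \<alpha> \<noteq> 0}. coeffA x \<alpha> * embA \<alpha> t)"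
  proof (cases "t \<in> range wordA")
    case True
    then obtain \<alpha>0 where t: "t = wordA \<alpha>0"
      by blast
    have "(\<Sum>\<alpha>\<in>{\<alpha>. coeffA x \<alpha> \<noteq> 0}. coeffA x \<alpha> * embA \<alpha> t)
        = (\<Sum>\<alpha>\<in>{\<alpha>. coeffA x \<alpha> \<noteq> 0}. if \<alpha> = \<alpha>0 then coeffA x \<alpha> * hbar ^ nzeros \<alpha> else 0)"
      using inj_wordA by (intro sum.cong) (auto simp: embA_apply t inj_eq)
    also have "\<dots> = (if coeffA x \<alpha>0 \<noteq> 0 then coeffA x \<alpha>0 * hbar ^ nzeros \<alpha>0 else 0)"
      using sum.delta[OF S, of \<alpha>0 "\<lambda>\<alpha>. coeffA x \<alpha> * hbar ^ nzeros \<alpha>"] by simp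
    also have "\<dots> = x t"
      using coeffA_mult[OF assms, of \<alpha>0] t by auto
    finally show ?thesis ..
  next
    case False
    then have "x t = 0"
      using isCA_is_Aword[OF assms, of t] by (auto simp: suppH_def is_Aword_iff_wordA)
    moreover have "embA \<alpha> t = 0" for \<alpha>
      using False by (auto simp: embA_apply)
    ultimately show ?thesis
      by simp
  qed
qed

lemma CA_iff_isCA: "x \<in> CA \<longleftrightarrow> isCA x"
proof
  show "x \<in> CA \<Longrightarrow> isCA x"
    by (auto simp: CA_def Arep_def intro!: isCA_sum isCA_embA)
qed (auto simp: CA_def dest: isCA_Arep)

lemma cA_eq_coeffA: "isCA x \<Longrightarrow> cA x = coeffA x"
  unfolding cA_def using isCA_Arep Arep_coeffA by (intro the_equality) auto

lemma isCA_linA: "isCA x \<Longrightarrow> (\<And>\<alpha>. isCA (f \<alpha>)) \<Longrightarrow> isCA (linA f x)"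
  by (simp add: linA_def cA_eq_coeffA isCA_sum finite_coeffA)

lemma linA_eq_linH:
  assumes "isCA x" "\<And>\<alpha>. f \<alpha> = scaleH (hbar ^ nzeros \<alpha>) (g (wordA \<alpha>))"
  shows "linA f x = linH g x"
proof
  fix t
  let ?S = "{\<alpha>. coeffA x \<alpha> \<noteq> 0}"
  have "linA f x t = (\<Sum>\<alpha>\<in>?S. x (wordA \<alpha>) * g (wordA \<alpha>) t)"
    using assms
    by (auto simp: linA_def cA_eq_coeffA scaleH_def mult.assoc simp flip: coeffA_mult
        intro!: sum.cong)
  also have "\<dots> = (\<Sum>u\<in>wordA ` ?S. x u * g u t)"
    using inj_wordA by (simp add: sum.reindex inj_on_subset)
  finally show "linA f x t = linH g x t"
    using assms by (simp add: linH_def suppH_eq_wordA_image)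
qed

section \<open>\<open>\<psi>\<close> and \<open>w\<^sup>S\<close> on \<open>C\<langle>A\<rangle>\<close>\<close>

lemma rho_word_replicate_La: "rho_word (replicate k La) = powH (rho_letter La) k"
proof (induction k)
  case (Suc k)
  have "rho_word (replicate (Suc k) La) = rho_word (replicate k La @ [La])"
    by (simp add: replicate_append_same)
  then show ?case
    by (simp add: rho_word_snoc Suc)
qed simp

lemma psiL_eq: "psiL k = scaleH (hbar ^ of_bool (k = 0)) (psi_letters (wordA [k]))"
  by (simp add: psiL_def embA_def wordA_def rho_word_replicate_La rho_letter.simps)

lemma finH_psiL [simp]: "finH (psiL k)"
  by (simp add: psiL_eq)

lemma psiW_snoc: "psiW (\<beta> @ [k]) = concH (psiL k) (psiW \<beta>)"
  by (simp add: psiW_def)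

lemma psi_letters_wordA_snoc:
  "psi_letters (wordA (\<beta> @ [k])) = concH (psi_letters (wordA [k])) (psi_letters (wordA \<beta>))"
proof (cases \<beta>)
  case (Cons k' \<beta>')
  then show ?thesis
    by (simp add: rho_word_append concH_assoc)
qed simp

lemma psiW_eq: "psiW \<beta> = scaleH (hbar ^ nzeros \<beta>) (psi_letters (wordA \<beta>))"
proof (induction \<beta> rule: rev_induct)
  case (snoc k \<beta>)
  then show ?case
    by (simp add: psiW_snoc psiL_eq psi_letters_wordA_snoc concH_scaleH_left concH_scaleH_right
        nzeros_append mult.commute del: wordA_append)
qed (simp add: psiW_def)

text \<open>Membership of \<open>b \<rho>(a)^k\<close> in \<open>C\<langle>A\<rangle>\<close>: multiplying by \<open>\<rho>(a) = -a - \<hbar>\<close> either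
  appends \<open>a\<close>, so that a final \<open>b\<close> no longer counts in the \<open>\<hbar>\<close>-weight, or supplies a
  factor \<open>\<hbar>\<close>. Hence the invariant only asks for a reduced power of \<open>\<hbar>\<close> at words ending
  in \<open>b\<close>.\<close>

definition isCA_weak :: "H \<Rightarrow> bool" where
  "isCA_weak x \<longleftrightarrow> finH x \<and> (\<forall>u. x u \<noteq> 0 \<longrightarrow> is_Aword u \<and> u \<noteq> []) \<and>
     (\<forall>u. hbar ^ (hbar_weight u - of_bool (ends_Lb u)) dvd x u)"

lemma isCA_weak_appH_La: "isCA_weak x \<Longrightarrow> isCA (appH x La)"
  unfolding isCA_def
proof (intro conjI allI impI)
  assume x: "isCA_weak x"
  then show "finH (appH x La)"
    by (simp add: isCA_weak_def)
  fix t
  show "appH x La t \<noteq> 0 \<Longrightarrow> is_Aword t"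
    using x by (auto simp: isCA_weak_def is_Aword_snoc dest!: appH_nonzero)
  show "hbar ^ hbar_weight t dvd appH x La t"
  proof (cases t rule: rev_cases)
    case (snoc t' l)
    have "hbar_weight (t' @ [La]) = hbar_weight t' - of_bool (ends_Lb t')"
      using hbar_weight_snoc_La[of t'] by simp
    then show ?thesis
      using x snoc by (simp add: isCA_weak_def)
  qed simp
qed

lemma isCA_weak_scaleH_hbar: "isCA_weak x \<Longrightarrow> isCA (scaleH hbar x)"
  unfolding isCA_def
proof (intro conjI allI impI)
  assume x: "isCA_weak x"
  then show "finH (scaleH hbar x)"
    by (simp add: isCA_weak_def)
  fix t
  show "scaleH hbar x t \<noteq> 0 \<Longrightarrow> is_Aword t"
    using x by (auto simp: isCA_weak_def scaleH_def)
  have "hbar ^ (hbar_weight t - of_bool (ends_Lb t)) dvd hbar ^ 0 * x t"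
    using x by (simp add: isCA_weak_def)
  then have "hbar ^ hbar_weight t dvd hbar ^ 1 * x t"
    by (rule power_dvd_mult_power_shift[OF hbar_nonzero]) (cases "ends_Lb t"; simp)
  then show "hbar ^ hbar_weight t dvd scaleH hbar x t"
    by (simp add: scaleH_def)
qed

lemma isCA_imp_isCA_weak: "isCA x \<Longrightarrow> x [] = 0 \<Longrightarrow> isCA_weak x"
  unfolding isCA_weak_def isCA_def
  by (metis dvd_trans diff_le_self le_imp_power_dvd)

lemma isCA_weak_concH_rho_La:
  assumes "isCA_weak x"
  shows "isCA (concH x (rho_letter La))" "isCA_weak (concH x (rho_letter La))"
proof -
  have [simp]: "finH x"
    using assms by (simp add: isCA_weak_def)
  show *: "isCA (concH x (rho_letter La))"
    using assms
    by (simp add: concH_rho_letter_La isCA_diff isCA_uminus isCA_weak_appH_La isCA_weak_scaleH_hbar)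
  have "x [] = 0"
    using assms by (auto simp: isCA_weak_def)
  then show "isCA_weak (concH x (rho_letter La))"
    by (intro isCA_imp_isCA_weak[OF *]) (simp add: concH_rho_letter_La scaleH_def)
qed

lemma isCA_weak_psi_letters: "isCA_weak (psi_letters (wordA [k]))"
proof (induction k)
  case 0
  have "psi_letters (wordA [0]) = monoH [Lb]"
    by simp
  then show ?case
    using finH_monoH[of "[Lb]"] unfolding isCA_weak_def
    by (auto simp: monoH_def hbar_weight_def ends_Lb_def)
next
  case (Suc k)
  have "psi_letters (wordA [Suc k]) = concH (psi_letters (wordA [k])) (rho_letter La)"
    by (simp add: concH_assoc)
  then show ?case
    using isCA_weak_concH_rho_La(2)[OF Suc] by simp
qed

lemma isCA_psiL: "isCA (psiL k)"
proof (cases k)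
  case 0
  then show ?thesis
    by (simp add: psiL_def isCA_embA)
next
  case (Suc n)
  have "psi_letters (wordA [Suc n]) = concH (psi_letters (wordA [n])) (rho_letter La)"
    by (simp add: concH_assoc)
  then show ?thesis
    using Suc isCA_weak_concH_rho_La(1)[OF isCA_weak_psi_letters] by (simp add: psiL_eq)
qed

lemma isCA_psiW: "isCA (psiW \<beta>)"
  by (induction \<beta> rule: rev_induct) (simp_all add: psiW_snoc isCA_concH isCA_psiL,
      simp add: psiW_def isCA_oneH)

lemma bcuts_wordA_eq_sum:
  assumes "finH p"
  shows "bcuts (wordA \<alpha>) p (monoH [Lb]) t =
    (\<Sum>i<length \<alpha>. shH (concH p (monoH (wordA (take i \<alpha>)))) (psi_letters (wordA (drop i \<alpha>))) t)"
  using assms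
proof (induction \<alpha> arbitrary: p)
  case (Cons k \<beta>)
  define p' where "p' = concH p (monoH (Lb # replicate k La))"
  have [simp]: "finH p'"
    using Cons.prems by (simp add: p'_def)
  have "concH (appH p Lb) (monoH (replicate k La)) = p'"
    using Cons.prems by (simp add: p'_def appH_eq_concH concH_assoc)
  then have "bcuts (wordA (k # \<beta>)) p (monoH [Lb]) t
      = shH p (psi_letters (wordA (k # \<beta>))) t + bcuts (wordA \<beta>) p' (monoH [Lb]) t"
    using Cons.prems by (simp add: bcuts_replicate_La)
  also have "\<dots> = shH p (psi_letters (wordA (k # \<beta>))) t +
      (\<Sum>i<length \<beta>. shH (concH p' (monoH (wordA (take i \<beta>)))) (psi_letters (wordA (drop i \<beta>))) t)"
    by (simp add: Cons.IH)
  also have "\<dots> = (\<Sum>i<length (k # \<beta>).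
      shH (concH p (monoH (wordA (take i (k # \<beta>))))) (psi_letters (wordA (drop i (k # \<beta>)))) t)"
    unfolding length_Cons sum.lessThan_Suc_shift using Cons.prems
    by (simp add: p'_def concH_assoc)
  finally show ?case .
qed simp

lemma wSW_eq: "wSW \<alpha> = scaleH (hbar ^ nzeros \<alpha>) (wS_letters (wordA \<alpha>))"
proof
  fix t
  have "shH (embA (take i \<alpha>)) (psiW (drop i \<alpha>))
      = scaleH (hbar ^ nzeros \<alpha>) (shH (monoH (wordA (take i \<alpha>))) (psi_letters (wordA (drop i \<alpha>))))"
    for i
    by (simp add: embA_def psiW_eq shH_scaleH_left shH_scaleH_right
        flip: nzeros_def power_add nzeros_append del: shH_monoH_monoH)
      (metis add.commute append_take_drop_id nzeros_append)
  then have summand: "shH (embA (take i \<alpha>)) (psiW (drop i \<alpha>)) t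
      = hbar ^ nzeros \<alpha> * shH (monoH (wordA (take i \<alpha>))) (psi_letters (wordA (drop i \<alpha>))) t" for i
    by (simp add: scaleH_def del: shH_monoH_monoH)
  have "wSW \<alpha> t = (\<Sum>i\<le>length \<alpha>.
      hbar ^ nzeros \<alpha> * shH (monoH (wordA (take i \<alpha>))) (psi_letters (wordA (drop i \<alpha>))) t)"
    by (simp only: wSW_def summand)
  also have "\<dots> = hbar ^ nzeros \<alpha> * ((\<Sum>i<length \<alpha>.
       shH (monoH (wordA (take i \<alpha>))) (psi_letters (wordA (drop i \<alpha>))) t) + monoH (wordA \<alpha>) t)"
    by (simp add: sum_distrib_left distrib_left lessThan_Suc_atMost[symmetric])
  also have "\<dots> = scaleH (hbar ^ nzeros \<alpha>) (wS_letters (wordA \<alpha>)) t"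
    using bcuts_wordA_eq_sum[of oneH \<alpha> t] by (simp add: wS_letters_def scaleH_def add.commute)
  finally show "wSW \<alpha> t = scaleH (hbar ^ nzeros \<alpha>) (wS_letters (wordA \<alpha>)) t" .
qed

theorem proposition4p2:
  fixes q :: complex and M :: nat and w w' :: H
  assumes "0 < norm q" and "norm q < 1"
    and "w \<in> CA" and "w' \<in> CA"
    and "1 \<le> M"
  shows "ZqS q M (shH w w') = ZqS q M (concH w (psiSh w'))"
proof -
  have w: "isCA w" and w': "isCA w'"
    using assms(3,4) by (simp_all add: CA_iff_isCA)
  have psi: "psiSh w' = linH psi_letters w'"
    unfolding psiSh_def by (rule linA_eq_linH[OF w' psiW_eq])
  have "isCA (psiSh w')"
    unfolding psiSh_def by (rule isCA_linA[OF w' isCA_psiW])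
  then have "isCA (concH w (psiSh w'))"
    by (rule isCA_concH[OF w])
  moreover have "isCA (shH w w')"
    using w w' by (rule isCA_shH)
  moreover have "linH wS_letters (shH w w') = linH wS_letters (concH w (linH psi_letters w'))"
    using w w' by (intro wS_letters_shH) (auto simp: isCA_finH isCA_is_Aword)
  ultimately have "wS (shH w w') = wS (concH w (psiSh w'))"
    unfolding wS_def psi by (simp add: linA_eq_linH[OF _ wSW_eq])
  then show ?thesis
    by (simp add: ZqS_def)
qed

end
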